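(* Let $M_p$, $A_p$, $\rho$ be as in the context and let $a\in\Gamma^{*,\infty}_{A_p,\rho}(\mathbb R^{2d})$ be $\Gamma^{*,\infty}_{A_p,\rho}$-hypoelliptic. Then there is $B>0$ such that $a$ does not vanish on $Q_B^c$ and $p_0(x,\xi)=a(x,\xi)^{-1}$ satisfies: in the Beurling case $*=(M_p)$, for every $h>0$ there exists $C>0$, and in the Roumieu case $*=\{M_p\}$, there exist $h,C>0$, such that $$|D^\alpha_\xi D^\beta_x p_0(x,\xi)|\le C\frac{h^{|\alpha|+|\beta|}|p_0(x,\xi)|A_{\alpha+\beta}}{\langle(x,\xi)\rangle^{\rho(|\alpha|+|\beta|)}},\quad \alpha,\beta\in\mathbb N^d,\ (x,\xi)\in Q^c_B.$$
   Context: Sequences: $M_p,A_p$ ($p\in\mathbb N$) are sequences of positive numbers with $M_0=M_1=A_0=A_1=1$. Conditions: (M.1) $N_p^2\le N_{p-1}N_{p+1}$ for $p\ge1$; (M.2) $N_p\le c_0H^p\min_{0\le q\le p}N_{p-q}N_q$ for some $c_0,H\ge1$; (M.3) $\sum_{p=q+1}^\infty N_{p-1}/N_p\le c_0 q N_q/N_{q+1}$ for $q\ge1$; (M.3)' $\sum_{p\ge1}N_{p-1}/N_p<\infty$; (M.4) $(N_p/p!)^2\le \frac{N_{p-1}}{(p-1)!}\frac{N_{p+1}}{(p+1)!}$ for $p\ge1$. Assume $M_p$ satisfies (M.1),(M.2),(M.3); $A_p$ satisfies (M.1),(M.2),(M.3)',(M.4); and $A_p\le c_0L^pM_p$ for some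 $c_0,L>0$ and all $p$. Let $\rho_0=\inf\{r>0:\exists c,L>0,\ A_p\le cL^pM_p^{r}\ \forall p\}$ and fix $\rho$ with $\rho_0\le\rho\le1$ if the infimum is attained, otherwise $\rho_0<\rho\le1$. For a multi-index $\alpha$, $A_\alpha=A_{|\alpha|}$. $M(t)=\sup_{p\in\mathbb N}\log_+(t^p/M_p)$ is the associated function of $M_p$. $\langle x\rangle=(1+|x|^2)^{1/2}$, $D^\alpha=(-i\partial)^\alpha$, and $Q_B^c=\{(x,\xi)\in\mathbb R^{2d}:\langle x\rangle\ge B\text{ or }\langle\xi\rangle\ge B\}$. Symbols: for $h,m>0$, $\Gamma^{M_p,\infty}_{A_p,\rho}(\mathbb R^{2d};h,m)$ is the set of $a\in C^\infty(\mathbb R^{2d})$ with $\sup_{\alpha,\beta\in\mathbb N^d}\sup_{(x,\xi)}|D^\alpha_\xi D^\beta_x a(x,\xi)|\langle(x,\xi)\rangle^{\rho|\alpha+\beta|}e^{-M(m|x|)-M(m|\xi|)}/(h^{|\alpha+\beta|}A_\alpha A_\beta)<\infty$. $a\in\Gamma^{(M_p),\infty}_{A_p,\rho}$ iff there is $m>0$ such that this holds for every $h>0$; $a\in\Gamma^{\{M_p\},\infty}_{A_p,\rho}$ iff there is $h>0$ such that this holds for every $m>0$. $*$ denotes $(M_p)$ or $\{M_p\}$. Hypoellipticity: $a\in\Gamma^{*,\infty}_{A_p,\rho}$ is $\Gamma^{*,\infty}_{A_p,\rho}$-hypoelliptic if (i) there exists $B>0$ such that there exist $c,m>0$ (Beurling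 case) / for every $m>0$ there exists $c>0$ (Roumieu case) with $|a(x,\xi)|\ge c\,e^{-M(m|x|)-M(m|\xi|)}$ on $Q_B^c$; and (ii) there exists $B>0$ such that for every $h>0$ there exists $C>0$ (Beurling) / there exist $h,C>0$ (Roumieu) with $|D^\alpha_\xi D^\beta_x a(x,\xi)|\le C h^{|\alpha|+|\beta|}|a(x,\xi)|A_\alpha A_\beta\langle(x,\xi)\rangle^{-\rho(|\alpha|+|\beta|)}$ for all $\alpha,\beta\in\mathbb N^d$, $(x,\xi)\in Q_B^c$. *)

theory Defs
  imports "HOL-Analysis.Analysis"
begin

definition weight_seq :: "(nat \<Rightarrow> real) \<Rightarrow> bool" where
  "weight_seq N \<longleftrightarrow> (\<forall>p. N p > 0) \<and> N 0 = 1 \<and> N 1 = 1"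

definition cond_M1 :: "(nat \<Rightarrow> real) \<Rightarrow> bool" where
  "cond_M1 N \<longleftrightarrow> (\<forall>p\<ge>1. (N p)^2 \<le> N (p - 1) * N (p + 1))"

text \<open>(M.2): the minimum over q in 0..p is written out as a bound for each such q.\<close>
definition cond_M2 :: "(nat \<Rightarrow> real) \<Rightarrow> bool" where
  "cond_M2 N \<longleftrightarrow> (\<exists>c0 H. c0 \<ge> 1 \<and> H \<ge> 1 \<and>
      (\<forall>p q. q \<le> p \<longrightarrow> N p \<le> c0 * H ^ p * (N (p - q) * N q)))"

text \<open>(M.3): the series over p \<ge> q+1 of N(p-1)/N(p), reindexed p = k + q + 1.\<close>
definition cond_M3 :: "(nat \<Rightarrow> real) \<Rightarrow> bool" where
  "cond_M3 N \<longleftrightarrow> (\<exists>c0. c0 \<ge> 1 \<and> (\<forall>q\<ge>1.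
      summable (\<lambda>k. N (k + q) / N (k + q + 1)) \<and>
      (\<Sum>k. N (k + q) / N (k + q + 1)) \<le> c0 * real q * N q / N (q + 1)))"

definition cond_M3' :: "(nat \<Rightarrow> real) \<Rightarrow> bool" where
  "cond_M3' N \<longleftrightarrow> summable (\<lambda>k. N k / N (k + 1))"

definition cond_M4 :: "(nat \<Rightarrow> real) \<Rightarrow> bool" where
  "cond_M4 N \<longleftrightarrow> (\<forall>p\<ge>1. (N p / fact p)^2 \<le>
      (N (p - 1) / fact (p - 1)) * (N (p + 1) / fact (p + 1)))"

definition assoc_fun :: "(nat \<Rightarrow> real) \<Rightarrow> real \<Rightarrow> real" where
  "assoc_fun N t = (SUP p. max 0 (ln (t ^ p / N p)))"

definition rho_set :: "(nat \<Rightarrow> real) \<Rightarrow> (nat \<Rightarrow> real) \<Rightarrow> real set" where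
  "rho_set M A = {r. r > 0 \<and> (\<exists>c L. c > 0 \<and> L > 0 \<and> (\<forall>p. A p \<le> c * L ^ p * (M p) powr r))}"

definition rho0 :: "(nat \<Rightarrow> real) \<Rightarrow> (nat \<Rightarrow> real) \<Rightarrow> real" where
  "rho0 M A = Inf (rho_set M A)"

definition admissible_rho :: "(nat \<Rightarrow> real) \<Rightarrow> (nat \<Rightarrow> real) \<Rightarrow> real \<Rightarrow> bool" where
  "admissible_rho M A \<rho> \<longleftrightarrow> \<rho> \<le> 1 \<and>
     (if rho0 M A \<in> rho_set M A then rho0 M A \<le> \<rho> else rho0 M A < \<rho>)"

definition mi_abs :: "('n::finite \<Rightarrow> nat) \<Rightarrow> nat" where
  "mi_abs \<alpha> = (\<Sum>i\<in>UNIV. \<alpha> i)"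

definition dirD :: "'v::real_normed_vector \<Rightarrow> ('v \<Rightarrow> complex) \<Rightarrow> 'v \<Rightarrow> complex" where
  "dirD v f z = vector_derivative (\<lambda>t. f (z + t *\<^sub>R v)) (at 0)"

text \<open>Iterated partial derivative \<partial>^\<alpha> along the directions e i (one coordinate
  at a time; for smooth functions the order is irrelevant).\<close>
fun pder_aux :: "nat \<Rightarrow> ('n::finite \<Rightarrow> 'v::real_normed_vector) \<Rightarrow> ('n \<Rightarrow> nat)
                  \<Rightarrow> ('v \<Rightarrow> complex) \<Rightarrow> 'v \<Rightarrow> complex" where
  "pder_aux 0 e \<alpha> f = f"
| "pder_aux (Suc k) e \<alpha> f =
     (if \<alpha> = (\<lambda>_. 0) then f
      else (let i = (SOME i. \<alpha> i \<noteq> 0) in dirD (e i) (pder_aux k e (\<alpha>(i := \<alpha> i - 1)) f)))"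

definition pder :: "('n::finite \<Rightarrow> 'v::real_normed_vector) \<Rightarrow> ('n \<Rightarrow> nat)
                  \<Rightarrow> ('v \<Rightarrow> complex) \<Rightarrow> 'v \<Rightarrow> complex" where
  "pder e \<alpha> f = pder_aux (mi_abs \<alpha>) e \<alpha> f"

definition Dx :: "('n::finite \<Rightarrow> nat) \<Rightarrow> ((real^'n) \<times> (real^'n) \<Rightarrow> complex)
                  \<Rightarrow> (real^'n) \<times> (real^'n) \<Rightarrow> complex" where
  "Dx \<beta> f z = (- \<i>) ^ mi_abs \<beta> * pder (\<lambda>i. (axis i 1, 0)) \<beta> f z"

definition Dxi :: "('n::finite \<Rightarrow> nat) \<Rightarrow> ((real^'n) \<times> (real^'n) \<Rightarrow> complex)
                  \<Rightarrow> (real^'n) \<times> (real^'n) \<Rightarrow> complex" where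
  "Dxi \<alpha> f z = (- \<i>) ^ mi_abs \<alpha> * pder (\<lambda>i. (0, axis i 1)) \<alpha> f z"

definition smooth2 :: "((real^'n::finite) \<times> (real^'n) \<Rightarrow> complex) \<Rightarrow> bool" where
  "smooth2 f \<longleftrightarrow> (\<forall>\<alpha> \<beta>. Dxi \<alpha> (Dx \<beta> f) differentiable_on UNIV)"

definition jbr :: "'v::real_normed_vector \<Rightarrow> real" where
  "jbr z = sqrt (1 + (norm z)^2)"

definition QBc :: "real \<Rightarrow> ((real^'n::finite) \<times> (real^'n)) set" where
  "QBc B = {(x, \<xi>). jbr x \<ge> B \<or> jbr \<xi> \<ge> B}"

datatype ultra_kind = Beurling | Roumieu

definition gamma_bound ::
  "(nat \<Rightarrow> real) \<Rightarrow> (nat \<Rightarrow> real) \<Rightarrow> real \<Rightarrow> ((real^'n::finite) \<times> (real^'n) \<Rightarrow> complex)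
     \<Rightarrow> real \<Rightarrow> real \<Rightarrow> bool" where
  "gamma_bound M A \<rho> a h m \<longleftrightarrow> (\<exists>C. \<forall>\<alpha> \<beta> x \<xi>.
     norm (Dxi \<alpha> (Dx \<beta> a) (x, \<xi>)) * jbr (x, \<xi>) powr (\<rho> * real (mi_abs (\<lambda>i. \<alpha> i + \<beta> i)))
       * exp (- assoc_fun M (m * norm x) - assoc_fun M (m * norm \<xi>))
       / (h ^ mi_abs (\<lambda>i. \<alpha> i + \<beta> i) * A (mi_abs \<alpha>) * A (mi_abs \<beta>)) \<le> C)"

definition Gamma_sym ::
  "ultra_kind \<Rightarrow> (nat \<Rightarrow> real) \<Rightarrow> (nat \<Rightarrow> real) \<Rightarrow> real
     \<Rightarrow> ((real^'n::finite) \<times> (real^'n) \<Rightarrow> complex) \<Rightarrow> bool" where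
  "Gamma_sym k M A \<rho> a \<longleftrightarrow> smooth2 a \<and>
     (case k of
        Beurling \<Rightarrow> (\<exists>m>0. \<forall>h>0. gamma_bound M A \<rho> a h m)
      | Roumieu \<Rightarrow> (\<exists>h>0. \<forall>m>0. gamma_bound M A \<rho> a h m))"

definition hypo_lower ::
  "ultra_kind \<Rightarrow> (nat \<Rightarrow> real) \<Rightarrow> real \<Rightarrow> ((real^'n::finite) \<times> (real^'n) \<Rightarrow> complex) \<Rightarrow> bool" where
  "hypo_lower k M B a \<longleftrightarrow>
     (let P = (\<lambda>c m. \<forall>x \<xi>. (x, \<xi>) \<in> QBc B \<longrightarrow>
                 norm (a (x, \<xi>)) \<ge> c * exp (- assoc_fun M (m * norm x) - assoc_fun M (m * norm \<xi>)))
      in case k of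
        Beurling \<Rightarrow> (\<exists>c>0. \<exists>m>0. P c m)
      | Roumieu \<Rightarrow> (\<forall>m>0. \<exists>c>0. P c m))"

definition deriv_est ::
  "(nat \<Rightarrow> real) \<Rightarrow> real \<Rightarrow> real \<Rightarrow> real \<Rightarrow> real \<Rightarrow> ((real^'n::finite) \<times> (real^'n) \<Rightarrow> complex) \<Rightarrow> bool" where
  "deriv_est A \<rho> B h C a \<longleftrightarrow> (\<forall>\<alpha> \<beta> z. z \<in> QBc B \<longrightarrow>
     norm (Dxi \<alpha> (Dx \<beta> a) z) \<le> C * h ^ (mi_abs \<alpha> + mi_abs \<beta>) * norm (a z)
        * A (mi_abs \<alpha>) * A (mi_abs \<beta>) / jbr z powr (\<rho> * real (mi_abs \<alpha> + mi_abs \<beta>)))"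

definition hypo_upper ::
  "ultra_kind \<Rightarrow> (nat \<Rightarrow> real) \<Rightarrow> real \<Rightarrow> real \<Rightarrow> ((real^'n::finite) \<times> (real^'n) \<Rightarrow> complex) \<Rightarrow> bool" where
  "hypo_upper k A \<rho> B a \<longleftrightarrow>
     (case k of
        Beurling \<Rightarrow> (\<forall>h>0. \<exists>C>0. deriv_est A \<rho> B h C a)
      | Roumieu \<Rightarrow> (\<exists>h>0. \<exists>C>0. deriv_est A \<rho> B h C a))"

definition hypoelliptic ::
  "ultra_kind \<Rightarrow> (nat \<Rightarrow> real) \<Rightarrow> (nat \<Rightarrow> real) \<Rightarrow> real
     \<Rightarrow> ((real^'n::finite) \<times> (real^'n) \<Rightarrow> complex) \<Rightarrow> bool" where
  "hypoelliptic k M A \<rho> a \<longleftrightarrow> Gamma_sym k M A \<rho> a \<and>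
     (\<exists>B>0. hypo_lower k M B a) \<and> (\<exists>B>0. hypo_upper k A \<rho> B a)"

end

theory Submission
  imports Defs "HOL-Library.Multiset"
begin

text \<open>Differentiating \<open>a \<cdot> a\<inverse> = 1\<close> by the Leibniz rule expresses a derivative of order \<open>n\<close>
  of \<open>p\<^sub>0 = a\<inverse>\<close> as \<open>-p\<^sub>0\<close> times a sum of products of a derivative of \<open>a\<close> of order
  \<open>j \<ge> 1\<close> and a derivative of \<open>p\<^sub>0\<close> of order \<open>n - j\<close>. Inserting the hypoellipticity bounds for
  \<open>a\<close> and, inductively, the claimed bounds for \<open>p\<^sub>0\<close>, the binomial coefficients turn into
  \<open>(n choose j) A\<^sub>j A\<^sub>n\<^sub>-\<^sub>j / A\<^sub>n\<close>, which are at most \<open>1\<close> by (M.4) and tend to \<open>0\<close> uniformly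
  in \<open>0 < j < n\<close> by (M.3)'. Hence bounds of the form \<open>K (2h)\<^sup>n\<close> propagate through the induction,
  which gives both the Beurling (apply the hypothesis with \<open>h/2\<close>) and the Roumieu estimate.
  Since the Leibniz rule is applied along arbitrary sequences of coordinate directions, one first
  needs that iterated derivatives of the smooth symbol do not depend on the order of
  differentiation (Schwarz' theorem).\<close>

primrec dirDs :: "'v::real_normed_vector list \<Rightarrow> ('v \<Rightarrow> complex) \<Rightarrow> 'v \<Rightarrow> complex" where
  "dirDs [] f = f"
| "dirDs (v # vs) f = dirD v (dirDs vs f)"

lemma dirDs_append: "dirDs (xs @ ys) f = dirDs xs (dirDs ys f)"
  by (induction xs) auto

lemma has_vector_derivative_along_line:
  assumes "(f has_derivative f') (at (z + t0 *\<^sub>R v))"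
  shows "((\<lambda>t. f (z + t *\<^sub>R v)) has_vector_derivative f' v) (at t0)"
proof -
  have "((\<lambda>t. z + t *\<^sub>R v) has_derivative (\<lambda>t. t *\<^sub>R v)) (at t0)"
    by (auto intro!: derivative_eq_intros)
  from has_derivative_compose[OF this assms]
  have "((\<lambda>t. f (z + t *\<^sub>R v)) has_derivative (\<lambda>t. f' (t *\<^sub>R v))) (at t0)" by simp
  moreover have "bounded_linear f'" using assms has_derivative_bounded_linear by blast
  ultimately show ?thesis unfolding has_vector_derivative_def by (simp add: linear_simps)
qed

lemma dirD_eq_derivative:
  assumes "(f has_derivative f') (at z)"
  shows "dirD v f z = f' v"
  unfolding dirD_def
  by (rule vector_derivative_at, rule has_vector_derivative_along_line[of f f' z 0 v]) (use assms in simp)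

lemma has_vector_derivative_dirD:
  assumes "f differentiable (at (z + t0 *\<^sub>R v))"
  shows "((\<lambda>t. f (z + t *\<^sub>R v)) has_vector_derivative dirD v f (z + t0 *\<^sub>R v)) (at t0)"
proof -
  obtain f' where f': "(f has_derivative f') (at (z + t0 *\<^sub>R v))"
    using assms unfolding differentiable_def by blast
  show ?thesis using has_vector_derivative_along_line[OF f'] dirD_eq_derivative[OF f'] by simp
qed

lemma has_vector_derivative_dirD_0:
  "f differentiable (at z) \<Longrightarrow> ((\<lambda>t. f (z + t *\<^sub>R v)) has_vector_derivative dirD v f z) (at 0)"
  using has_vector_derivative_dirD[of f z 0 v] by simp

lemma dirD_cong_open:
  assumes "open U" "z \<in> U" "\<And>x. x \<in> U \<Longrightarrow> f x = g x"
  shows "dirD v f z = dirD v g z"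
proof -
  let ?S = "(\<lambda>t. z + t *\<^sub>R v) -` U"
  have S: "open ?S" "0 \<in> ?S"
    using assms(1,2) by (auto intro!: continuous_open_vimage continuous_intros)
  have "((\<lambda>t. f (z + t *\<^sub>R v)) has_vector_derivative d) (at 0) \<longleftrightarrow>
        ((\<lambda>t. g (z + t *\<^sub>R v)) has_vector_derivative d) (at 0)" for d
  proof
    assume "((\<lambda>t. f (z + t *\<^sub>R v)) has_vector_derivative d) (at 0)"
    from has_vector_derivative_transform_within_open[OF this S] show
      "((\<lambda>t. g (z + t *\<^sub>R v)) has_vector_derivative d) (at 0)" using assms(3) by simp
  next
    assume "((\<lambda>t. g (z + t *\<^sub>R v)) has_vector_derivative d) (at 0)"
    from has_vector_derivative_transform_within_open[OF this S] show
      "((\<lambda>t. f (z + t *\<^sub>R v)) has_vector_derivative d) (at 0)" using assms(3) by simp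
  qed
  then show ?thesis unfolding dirD_def vector_derivative_def by simp
qed

lemma dirDs_cong_open:
  assumes "open U" "\<And>x. x \<in> U \<Longrightarrow> f x = g x" "z \<in> U"
  shows "dirDs vs f z = dirDs vs g z"
  using assms(3)
proof (induction vs arbitrary: z)
  case (Cons v vs)
  then show ?case using dirD_cong_open[OF assms(1) Cons.prems, of "dirDs vs f" "dirDs vs g"] by simp
qed (use assms in simp)

lemma dirD_const: "dirD v (\<lambda>_. c) z = 0"
  unfolding dirD_def by (rule vector_derivative_at) (auto intro!: derivative_eq_intros)

lemma dirDs_const: "vs \<noteq> [] \<Longrightarrow> dirDs vs (\<lambda>_. c) = (\<lambda>_. 0)"
proof (induction vs)
  case (Cons v vs)
  show ?case
  proof (cases "vs = []")
    case False
    then have "dirDs vs (\<lambda>_. c) = (\<lambda>_. 0)" using Cons.IH by simp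
    then show ?thesis by (intro ext) (simp add: dirD_const)
  qed (simp add: dirD_const fun_eq_iff)
qed simp

lemma dirD_cmult:
  assumes "g differentiable (at x)"
  shows "dirD v (\<lambda>z. c * g z) x = c * dirD v g x"
  unfolding dirD_def[of v "\<lambda>z. c * g z"]
  by (rule vector_derivative_at)
     (use has_vector_derivative_mult_right[OF has_vector_derivative_dirD_0[OF assms]] in simp)

lemma differentiable_open_cong:
  assumes "open U" "x \<in> U" "\<And>y. y \<in> U \<Longrightarrow> f y = g y" "f differentiable (at x)"
  shows "g differentiable (at x)"
proof -
  obtain f' where "(f has_derivative f') (at x)" using assms(4) unfolding differentiable_def by blast
  from has_derivative_transform_within_open[OF this assms(1,2)] assms(3)
  show ?thesis unfolding differentiable_def by blast
qed

text \<open>A constant factor commutes with iterated derivatives wherever either side of every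
  intermediate stage is differentiable (the derivative of a non-differentiable function is junk).\<close>
lemma dirDs_cmult:
  assumes U: "open U" and c: "c \<noteq> 0"
    and diff: "\<And>k x. 1 \<le> k \<Longrightarrow> k \<le> length L \<Longrightarrow> x \<in> U \<Longrightarrow>
       dirDs (drop k L) g differentiable (at x) \<or> dirDs (drop k L) (\<lambda>z. c * g z) differentiable (at x)"
    and x: "x \<in> U"
  shows "dirDs L (\<lambda>z. c * g z) x = c * dirDs L g x"
  using diff x
proof (induction L arbitrary: x)
  case (Cons v ws)
  have IH: "dirDs ws (\<lambda>z. c * g z) y = c * dirDs ws g y" if "y \<in> U" for y
    by (rule Cons.IH[OF _ that]) (use Cons.prems(1)[of "Suc _"] in auto)
  have "dirDs ws g differentiable (at x) \<or> dirDs ws (\<lambda>z. c * g z) differentiable (at x)"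
    using Cons.prems(1)[of 1 x] Cons.prems(2) by simp
  then have "dirDs ws g differentiable (at x)"
  proof
    assume "dirDs ws (\<lambda>z. c * g z) differentiable (at x)"
    then have "(\<lambda>y. inverse c * dirDs ws (\<lambda>z. c * g z) y) differentiable (at x)" by simp
    then show ?thesis by (rule differentiable_open_cong[OF U Cons.prems(2), rotated]) (use IH c in simp)
  qed
  then show ?case
    using dirD_cong_open[OF U Cons.prems(2) IH] dirD_cmult by simp
qed simp

section \<open>Symmetry of mixed directional derivatives\<close>

lemma norm_diff_le_of_vector_derivative_bound:
  fixes \<phi> :: "real \<Rightarrow> 'b::real_normed_vector"
  assumes "\<And>t. t \<in> closed_segment s0 s1 \<Longrightarrow> (\<phi> has_vector_derivative \<phi>' t) (at t)"
    and "\<And>t. t \<in> closed_segment s0 s1 \<Longrightarrow> norm (\<phi>' t) \<le> B"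
  shows "norm (\<phi> s1 - \<phi> s0) \<le> B * \<bar>s1 - s0\<bar>"
proof -
  have "norm (\<phi> s1 - \<phi> s0) \<le> B * norm (s1 - s0)"
  proof (rule differentiable_bound[of "closed_segment s0 s1" \<phi> "\<lambda>t h. h *\<^sub>R \<phi>' t"])
    fix x assume x: "x \<in> closed_segment s0 s1"
    show "(\<phi> has_derivative (\<lambda>h. h *\<^sub>R \<phi>' x)) (at x within closed_segment s0 s1)"
      using assms(1)[OF x] unfolding has_vector_derivative_def by (rule has_derivative_at_withinI)
    have "onorm (\<lambda>h::real. h *\<^sub>R \<phi>' x) = norm (\<phi>' x)"
      using onorm_scaleR_left[OF bounded_linear_ident] by (simp add: onorm_id)
    then show "onorm (\<lambda>h. h *\<^sub>R \<phi>' x) \<le> B" using assms(2)[OF x] by simp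
  qed auto
  then show ?thesis by simp
qed

lemma norm_vector_derivative_diff_le:
  fixes g :: "real \<Rightarrow> 'b::real_normed_vector"
  assumes g: "(g has_vector_derivative g') (at 0)" and \<delta>: "\<delta> > 0"
    and incr: "\<And>t. \<bar>t\<bar> < \<delta> \<Longrightarrow> norm (g t - g 0 - t *\<^sub>R X) \<le> e * \<bar>t\<bar>"
  shows "norm (g' - X) \<le> e"
proof (rule field_le_epsilon)
  fix \<eta> :: real assume \<eta>: "\<eta> > 0"
  from g have "(g has_derivative (\<lambda>h. h *\<^sub>R g')) (at 0)" unfolding has_vector_derivative_def .
  then obtain d where d: "d > 0"
    "\<And>y. norm (y - 0) < d \<Longrightarrow> norm (g y - g 0 - (y - 0) *\<^sub>R g') \<le> \<eta> * norm (y - 0)"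
    unfolding has_derivative_at_alt using \<eta> by blast
  define t where "t = min d \<delta> / 2"
  have t: "t > 0" "t < d" "t < \<delta>" using d \<delta> by (auto simp: t_def)
  have "t *\<^sub>R (g' - X) = (g t - g 0 - t *\<^sub>R X) - (g t - g 0 - t *\<^sub>R g')"
    by (simp add: algebra_simps)
  then have "t * norm (g' - X) \<le> norm (g t - g 0 - t *\<^sub>R X) + norm (g t - g 0 - t *\<^sub>R g')"
    using t norm_triangle_ineq4 by (metis abs_of_pos norm_scaleR)
  also have "\<dots> \<le> t * (e + \<eta>)"
    using d(2)[of t] incr[of t] t by (simp add: algebra_simps)
  finally show "norm (g' - X) \<le> e + \<eta>" using t by simp
qed

lemma second_difference_bound:
  fixes f :: "'v::real_normed_vector \<Rightarrow> complex"
  assumes df: "\<And>x. f differentiable (at x)"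
    and du: "\<And>x. dirD u f differentiable (at x)"
    and close: "\<And>\<sigma> r. \<bar>\<sigma>\<bar> \<le> \<bar>s\<bar> \<Longrightarrow> \<bar>r\<bar> \<le> \<bar>t\<bar> \<Longrightarrow>
                  norm (dirD v (dirD u f) (z + \<sigma> *\<^sub>R u + r *\<^sub>R v) - c) \<le> \<epsilon>"
  shows "norm ((f (z + s *\<^sub>R u + t *\<^sub>R v) - f (z + s *\<^sub>R u) - f (z + t *\<^sub>R v) + f z)
                - (s * t) *\<^sub>R c) \<le> \<epsilon> * \<bar>t\<bar> * \<bar>s\<bar>"
proof -
  have seg: "\<bar>\<sigma>\<bar> \<le> \<bar>s'\<bar>" if "\<sigma> \<in> closed_segment 0 s'" for \<sigma> s' :: real
    using that by (auto simp: closed_segment_eq_real_ivl split: if_splits)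
  have lin: "((\<lambda>r. r *\<^sub>R c') has_vector_derivative c') (at r)" for r :: real and c' :: complex
    unfolding has_vector_derivative_def
    by (rule bounded_linear.has_derivative[OF bounded_linear_scaleR_left]) simp
  have inner: "norm (dirD u f (z + \<sigma> *\<^sub>R u + t *\<^sub>R v) - dirD u f (z + \<sigma> *\<^sub>R u) - t *\<^sub>R c) \<le> \<epsilon> * \<bar>t\<bar>"
    if \<sigma>: "\<sigma> \<in> closed_segment 0 s" for \<sigma>
  proof -
    have "norm ((dirD u f (z + \<sigma> *\<^sub>R u + t *\<^sub>R v) - t *\<^sub>R c)
              - (dirD u f (z + \<sigma> *\<^sub>R u + 0 *\<^sub>R v) - 0 *\<^sub>R c)) \<le> \<epsilon> * \<bar>t - 0\<bar>"
    proof (rule norm_diff_le_of_vector_derivative_bound)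
      fix r assume r: "r \<in> closed_segment 0 t"
      show "((\<lambda>r. dirD u f (z + \<sigma> *\<^sub>R u + r *\<^sub>R v) - r *\<^sub>R c) has_vector_derivative
              dirD v (dirD u f) (z + \<sigma> *\<^sub>R u + r *\<^sub>R v) - c) (at r)"
        by (intro has_vector_derivative_diff lin has_vector_derivative_dirD du)
      show "norm (dirD v (dirD u f) (z + \<sigma> *\<^sub>R u + r *\<^sub>R v) - c) \<le> \<epsilon>"
        using close seg[OF \<sigma>] seg[OF r] by blast
    qed
    then show ?thesis by (simp add: algebra_simps)
  qed
  have "norm ((f (z + t *\<^sub>R v + s *\<^sub>R u) - f (z + s *\<^sub>R u) - (s * t) *\<^sub>R c)
            - (f (z + t *\<^sub>R v + 0 *\<^sub>R u) - f (z + 0 *\<^sub>R u) - (0 * t) *\<^sub>R c))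
        \<le> (\<epsilon> * \<bar>t\<bar>) * \<bar>s - 0\<bar>"
  proof (rule norm_diff_le_of_vector_derivative_bound)
    fix \<sigma> assume \<sigma>: "\<sigma> \<in> closed_segment 0 s"
    have "((\<lambda>\<sigma>. (\<sigma> * t) *\<^sub>R c) has_vector_derivative t *\<^sub>R c) (at \<sigma>)"
      using lin[where c'="t *\<^sub>R c"] by (simp add: mult.commute)
    then show "((\<lambda>\<sigma>. f (z + t *\<^sub>R v + \<sigma> *\<^sub>R u) - f (z + \<sigma> *\<^sub>R u) - (\<sigma> * t) *\<^sub>R c) has_vector_derivative
           dirD u f (z + t *\<^sub>R v + \<sigma> *\<^sub>R u) - dirD u f (z + \<sigma> *\<^sub>R u) - t *\<^sub>R c) (at \<sigma>)"
      by (intro has_vector_derivative_diff has_vector_derivative_dirD df)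
    show "norm (dirD u f (z + t *\<^sub>R v + \<sigma> *\<^sub>R u) - dirD u f (z + \<sigma> *\<^sub>R u) - t *\<^sub>R c) \<le> \<epsilon> * \<bar>t\<bar>"
      using inner[OF \<sigma>] by (simp add: algebra_simps)
  qed
  then show ?thesis by (simp add: algebra_simps)
qed

text \<open>Taking \<open>t \<rightarrow> 0\<close> and then \<open>s \<rightarrow> 0\<close> in the second difference.\<close>
lemma norm_mixed_dirD_diff_le:
  fixes f :: "'v::real_normed_vector \<Rightarrow> complex"
  assumes df: "\<And>x. f differentiable (at x)"
    and du: "\<And>x. dirD u f differentiable (at x)"
    and dv: "\<And>x. dirD v f differentiable (at x)"
    and \<delta>: "\<delta> > 0"
    and close: "\<And>\<sigma> r. \<bar>\<sigma>\<bar> < \<delta> \<Longrightarrow> \<bar>r\<bar> < \<delta> \<Longrightarrow>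
                  norm (dirD v (dirD u f) (z + \<sigma> *\<^sub>R u + r *\<^sub>R v) - c) \<le> \<epsilon>"
  shows "norm (dirD u (dirD v f) z - c) \<le> \<epsilon>"
proof (rule norm_vector_derivative_diff_le[OF has_vector_derivative_dirD_0[OF dv] \<delta>])
  fix s :: real assume s: "\<bar>s\<bar> < \<delta>"
  have "norm ((dirD v f (z + s *\<^sub>R u) - dirD v f z) - s *\<^sub>R c) \<le> \<epsilon> * \<bar>s\<bar>"
  proof (rule norm_vector_derivative_diff_le[OF _ \<delta>])
    show "((\<lambda>t. f (z + s *\<^sub>R u + t *\<^sub>R v) - f (z + t *\<^sub>R v)) has_vector_derivative
            dirD v f (z + s *\<^sub>R u) - dirD v f z) (at 0)"
      by (intro has_vector_derivative_diff has_vector_derivative_dirD_0 df)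
    fix t :: real assume "\<bar>t\<bar> < \<delta>"
    then have "norm ((f (z + s *\<^sub>R u + t *\<^sub>R v) - f (z + s *\<^sub>R u) - f (z + t *\<^sub>R v) + f z)
                 - (s * t) *\<^sub>R c) \<le> \<epsilon> * \<bar>t\<bar> * \<bar>s\<bar>"
      using s by (intro second_difference_bound[OF df du] close) auto
    then show "norm (f (z + s *\<^sub>R u + t *\<^sub>R v) - f (z + t *\<^sub>R v) -
             (f (z + s *\<^sub>R u + 0 *\<^sub>R v) - f (z + 0 *\<^sub>R v)) - t *\<^sub>R s *\<^sub>R c) \<le> \<epsilon> * \<bar>s\<bar> * \<bar>t\<bar>"
      by (simp add: algebra_simps)
  qed
  then show "norm (dirD v f (z + s *\<^sub>R u) - dirD v f (z + 0 *\<^sub>R u) - s *\<^sub>R c) \<le> \<epsilon> * \<bar>s\<bar>"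
    by simp
qed

lemma dirD_commute:
  fixes f :: "'v::real_normed_vector \<Rightarrow> complex"
  assumes df: "\<And>x. f differentiable (at x)"
    and du: "\<And>x. dirD u f differentiable (at x)"
    and dv: "\<And>x. dirD v f differentiable (at x)"
    and cont: "continuous_on UNIV (dirD v (dirD u f))"
  shows "dirD u (dirD v f) z = dirD v (dirD u f) z"
proof -
  define c where "c = dirD v (dirD u f) z"
  have approx: "norm (dirD u (dirD v f) z - c) \<le> \<epsilon>" if \<epsilon>: "\<epsilon> > 0" for \<epsilon>
  proof -
    have "isCont (dirD v (dirD u f)) z" using cont by (simp add: continuous_on_eq_continuous_at)
    then obtain d where d: "d > 0" "\<And>p. dist p z < d \<Longrightarrow> dist (dirD v (dirD u f) p) c < \<epsilon>"
      unfolding continuous_at_eps_delta c_def using \<epsilon> by blast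
    define \<delta> where "\<delta> = d / (norm u + norm v + 1)"
    have nuv: "norm u + norm v + 1 > 0" by (simp add: add_nonneg_pos)
    then have \<delta>: "\<delta> > 0" using d by (simp add: \<delta>_def)
    show ?thesis
    proof (rule norm_mixed_dirD_diff_le[OF df du dv \<delta>])
      fix \<sigma> r :: real assume small: "\<bar>\<sigma>\<bar> < \<delta>" "\<bar>r\<bar> < \<delta>"
      have "norm (\<sigma> *\<^sub>R u + r *\<^sub>R v) \<le> \<bar>\<sigma>\<bar> * norm u + \<bar>r\<bar> * norm v"
        using norm_triangle_ineq[of "\<sigma> *\<^sub>R u" "r *\<^sub>R v"] by simp
      also have "\<dots> \<le> \<delta> * norm u + \<delta> * norm v"
        using small by (intro add_mono mult_right_mono) auto
      also have "\<dots> < \<delta> * (norm u + norm v + 1)" using \<delta> by (simp add: algebra_simps)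
      also have "\<dots> = d" using nuv by (simp add: \<delta>_def)
      finally show "norm (dirD v (dirD u f) (z + \<sigma> *\<^sub>R u + r *\<^sub>R v) - c) \<le> \<epsilon>"
        using d(2)[of "z + \<sigma> *\<^sub>R u + r *\<^sub>R v"] by (simp add: dist_norm)
    qed
  qed
  have "norm (dirD u (dirD v f) z - c) \<le> 0"
    by (rule field_le_epsilon) (use approx in simp)
  then show ?thesis by (simp add: c_def)
qed

section \<open>Iterated derivatives only depend on the multiset of directions\<close>

text \<open>Induction on the length: a list and its canonical rearrangement either start with the same
  direction, or their heads can be swapped by Schwarz' theorem after rearranging the tails.\<close>
lemma dirDs_eq_dirDs_canonical:
  fixes f :: "'v::real_normed_vector \<Rightarrow> complex" and canon :: "'v multiset \<Rightarrow> 'v list"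
  assumes canon: "\<And>M. set_mset M \<subseteq> E \<Longrightarrow> mset (canon M) = M"
    and diff: "\<And>M x. set_mset M \<subseteq> E \<Longrightarrow> dirDs (canon M) f differentiable (at x)"
  shows "L \<in> lists E \<Longrightarrow> dirDs L f = dirDs (canon (mset L)) f"
proof (induction "length L" arbitrary: L rule: less_induct)
  case less
  have perm: "dirDs L1 f = dirDs L2 f"
    if "L1 \<in> lists E" "L2 \<in> lists E" "length L1 < length L" "mset L1 = mset L2" for L1 L2
  proof -
    have "length L2 < length L" using that mset_eq_length by metis
    then show ?thesis using less.hyps that by metis
  qed
  have shorter_diff: "dirDs L' f differentiable (at x)"
    if "L' \<in> lists E" "length L' < length L" for L' x
    using less.hyps[OF that(2,1)] diff[of "mset L'" x] that(1) by auto
  have LE: "set_mset (mset L) \<subseteq> E" using less.prems by auto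
  define c where "c = canon (mset L)"
  have mc: "mset c = mset L" using canon[OF LE] c_def by simp
  show ?case
  proof (cases L)
    case (Cons v ws)
    obtain w cs where c: "c = w # cs" using mc Cons by (cases c) auto
    have "set c = set L" using mc by (metis set_mset_mset)
    then have ws: "ws \<in> lists E" "v \<in> E" and cs: "cs \<in> lists E" "w \<in> E"
      using less.prems Cons c by auto
    have m1: "add_mset w (mset cs) = add_mset v (mset ws)" using mc c Cons by simp
    show ?thesis
    proof (cases "v = w")
      case True
      then have "mset cs = mset ws" using m1 by simp
      moreover have "length cs < length L" using Cons c mc mset_eq_length by fastforce
      ultimately have "dirDs cs f = dirDs ws f" using perm[OF cs(1) ws(1)] by blast
      then show ?thesis using c c_def Cons True by simp
    next
      case False
      define rest where "rest = remove1 w ws"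
      have "w \<in> set ws" using m1 False
        by (metis add_mset_remove_trivial_eq insert_noteq_member set_mset_mset union_single_eq_member)
      then have mws: "mset ws = mset (w # rest)" by (simp add: rest_def)
      have mcs: "mset cs = mset (v # rest)" using m1 mws by (simp add: add_mset_commute)
      have rE: "rest \<in> lists E" using ws(1) by (auto simp: rest_def dest: in_set_remove1[THEN iffD1, rotated] notin_set_remove1)
      have lens: "length ws < length L" "length cs < length L" "length rest < length L"
        using Cons mws mcs mset_eq_length c mc by fastforce+
      define g where "g = dirDs rest f"
      have ew: "dirDs ws f = dirD w g" using perm[OF ws(1), of "w # rest"] lens mws rE cs by (simp add: g_def)
      have ev: "dirDs cs f = dirD v g" using perm[OF cs(1), of "v # rest"] lens mcs rE ws by (simp add: g_def)
      have "continuous_on UNIV (dirDs c f)"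
        using diff[OF LE] c_def by (simp add: differentiable_at_imp_differentiable_on differentiable_imp_continuous_on)
      then have "dirD v (dirD w g) z = dirD w (dirD v g) z" for z
        using shorter_diff[OF rE lens(3)] shorter_diff[OF cs(1) lens(2)] shorter_diff[OF ws(1) lens(1)]
        by (intro dirD_commute) (auto simp: g_def[symmetric] ew ev c)
      then show ?thesis using Cons ew c ev c_def by auto
    qed
  qed (use mc c_def in simp)
qed

section \<open>The Leibniz rule\<close>

definition sel :: "bool list \<Rightarrow> 'a list \<Rightarrow> 'a list" where
  "sel bs vs = map snd (filter fst (zip bs vs))"

definition unsel :: "bool list \<Rightarrow> 'a list \<Rightarrow> 'a list" where
  "unsel bs vs = sel (map Not bs) vs"

definition masks :: "nat \<Rightarrow> bool list set" where
  "masks n = {bs. length bs = n}"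

definition ntrue :: "bool list \<Rightarrow> nat" where
  "ntrue bs = length (filter id bs)"

lemma sel_simps [simp]:
  "sel [] vs = []" "sel bs [] = []"
  "sel (True # bs) (v # vs) = v # sel bs vs" "sel (False # bs) (v # vs) = sel bs vs"
  "unsel [] vs = []" "unsel bs [] = []"
  "unsel (True # bs) (v # vs) = unsel bs vs" "unsel (False # bs) (v # vs) = v # unsel bs vs"
  by (auto simp: sel_def unsel_def)

lemma ntrue_simps [simp]: "ntrue [] = 0" "ntrue (True # bs) = Suc (ntrue bs)" "ntrue (False # bs) = ntrue bs"
  by (auto simp: ntrue_def)

lemma ntrue_le_length: "ntrue bs \<le> length bs"
  unfolding ntrue_def by simp

lemma length_sel_unsel:
  "length bs = length vs \<Longrightarrow> length (sel bs vs) = ntrue bs \<and> length (unsel bs vs) = length vs - ntrue bs"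
proof (induction bs arbitrary: vs)
  case (Cons b bs)
  then obtain v vs' where "vs = v # vs'" by (cases vs) auto
  then show ?case using Cons ntrue_le_length[of bs] by (cases b) auto
qed simp

lemma set_sel_unsel: "set (sel bs vs) \<subseteq> set vs" "set (unsel bs vs) \<subseteq> set vs"
  unfolding sel_def unsel_def by (auto dest: set_zip_rightD)

lemma sel_unsel_all_False:
  "length vs = n \<Longrightarrow> sel (replicate n False) vs = [] \<and> unsel (replicate n False) vs = vs"
  by (induction vs arbitrary: n) auto

lemma ntrue_pos: "length bs = n \<Longrightarrow> bs \<noteq> replicate n False \<Longrightarrow> ntrue bs \<ge> 1"
proof (induction bs arbitrary: n)
  case (Cons b bs)
  then show ?case by (cases b) (auto simp: Suc_le_eq)
qed simp

lemma finite_masks: "finite (masks n)"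
  using finite_lists_length_eq[of "UNIV :: bool set" n] by (simp add: masks_def)

lemma masks_0: "masks 0 = {[]}"
  by (auto simp: masks_def)

lemma sum_masks_Suc:
  "(\<Sum>bs\<in>masks (Suc n). F bs) = (\<Sum>bs\<in>masks n. F (True # bs)) + (\<Sum>bs\<in>masks n. F (False # bs))"
proof -
  have "masks (Suc n) = Cons True ` masks n \<union> Cons False ` masks n"
    by (auto simp: masks_def length_Suc_conv)
  then have "(\<Sum>bs\<in>masks (Suc n). F bs) = (\<Sum>bs\<in>Cons True ` masks n. F bs) + (\<Sum>bs\<in>Cons False ` masks n. F bs)"
    by (simp only:) (rule sum.union_disjoint, auto simp: finite_masks)
  then show ?thesis by (simp add: sum.reindex)
qed

lemma sum_masks_ntrue: "(\<Sum>bs\<in>masks n. F (ntrue bs)) = (\<Sum>j\<le>n. real (n choose j) * F j)"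
proof (induction n arbitrary: F)
  case (Suc n)
  have "(\<Sum>bs\<in>masks (Suc n). F (ntrue bs))
      = (\<Sum>j\<le>n. real (n choose j) * F (Suc j)) + (\<Sum>j\<le>n. real (n choose j) * F j)"
    using Suc.IH[of "\<lambda>j. F (Suc j)"] Suc.IH[of F] by (simp add: sum_masks_Suc)
  also have "(\<Sum>j\<le>n. real (n choose j) * F j) = F 0 + (\<Sum>j\<le>n. real (n choose Suc j) * F (Suc j))"
    using sum.atMost_Suc_shift[of "\<lambda>j. real (n choose j) * F j" n] by (simp add: binomial_eq_0)
  also have "(\<Sum>j\<le>n. real (n choose j) * F (Suc j)) + (F 0 + (\<Sum>j\<le>n. real (n choose Suc j) * F (Suc j)))
      = (\<Sum>j\<le>Suc n. real (Suc n choose j) * F j)"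
    by (subst sum.atMost_Suc_shift) (simp add: sum.distrib[symmetric] algebra_simps)
  finally show ?case .
qed (simp add: masks_0)

lemma sum_nonempty_masks_ntrue:
  assumes "F 0 = 0"
  shows "(\<Sum>bs\<in>masks n - {replicate n False}. F (ntrue bs)) = (\<Sum>j<n. real (n choose Suc j) * F (Suc j))"
proof -
  have "(\<Sum>bs\<in>masks n - {replicate n False}. F (ntrue bs)) = (\<Sum>bs\<in>masks n. F (ntrue bs))"
    using sum.remove[OF finite_masks, of "replicate n False" n "\<lambda>bs. F (ntrue bs)"] assms
    by (simp add: masks_def ntrue_def)
  also have "\<dots> = (\<Sum>j\<le>n. real (n choose j) * F j)" by (rule sum_masks_ntrue)
  also have "\<dots> = (\<Sum>j<n. real (n choose Suc j) * F (Suc j))"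
    unfolding sum.atMost_shift[of _ n] using assms by simp
  finally show ?thesis .
qed

lemma dirD_sum_mult:
  assumes "finite S" "\<And>b. b \<in> S \<Longrightarrow> P b differentiable (at z)" "\<And>b. b \<in> S \<Longrightarrow> Q b differentiable (at z)"
  shows "dirD v (\<lambda>x. \<Sum>b\<in>S. P b x * Q b x) z = (\<Sum>b\<in>S. dirD v (P b) z * Q b z + P b z * dirD v (Q b) z)"
proof -
  have "((\<lambda>t. \<Sum>b\<in>S. P b (z + t *\<^sub>R v) * Q b (z + t *\<^sub>R v)) has_vector_derivative
          (\<Sum>b\<in>S. P b (z + 0 *\<^sub>R v) * dirD v (Q b) z + dirD v (P b) z * Q b (z + 0 *\<^sub>R v))) (at 0)"
    by (intro has_vector_derivative_sum has_vector_derivative_mult has_vector_derivative_dirD_0 assms)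
  then show ?thesis unfolding dirD_def[of v "\<lambda>x. \<Sum>b\<in>S. P b x * Q b x"]
    by (subst vector_derivative_at) (auto simp: algebra_simps)
qed

lemma dirDs_mult:
  assumes U: "open U"
    and df: "\<And>ws x. ws \<in> lists E \<Longrightarrow> length ws < length vs \<Longrightarrow> x \<in> U \<Longrightarrow> dirDs ws f differentiable (at x)"
    and dg: "\<And>ws x. ws \<in> lists E \<Longrightarrow> length ws < length vs \<Longrightarrow> x \<in> U \<Longrightarrow> dirDs ws g differentiable (at x)"
    and vs: "vs \<in> lists E" and z: "z \<in> U"
  shows "dirDs vs (\<lambda>x. f x * g x) z = (\<Sum>bs\<in>masks (length vs). dirDs (sel bs vs) f z * dirDs (unsel bs vs) g z)"
  using df dg vs z
proof (induction vs arbitrary: z)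
  case (Cons v vs)
  have IH: "dirDs vs (\<lambda>x. f x * g x) x = (\<Sum>bs\<in>masks (length vs). dirDs (sel bs vs) f x * dirDs (unsel bs vs) g x)"
    if "x \<in> U" for x
    by (rule Cons.IH) (use Cons.prems that in auto)
  have parts: "sel bs vs \<in> lists E" "length (sel bs vs) < length (v # vs)"
     "unsel bs vs \<in> lists E" "length (unsel bs vs) < length (v # vs)" if "bs \<in> masks (length vs)" for bs
    using set_sel_unsel[of bs vs] length_sel_unsel[of bs vs] ntrue_le_length[of bs] Cons.prems(3) that
    by (auto simp: masks_def)
  have "dirDs (v # vs) (\<lambda>x. f x * g x) z
      = dirD v (\<lambda>x. \<Sum>bs\<in>masks (length vs). dirDs (sel bs vs) f x * dirDs (unsel bs vs) g x) z"
    using dirD_cong_open[OF U Cons.prems(4) IH] by simp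
  also have "\<dots> = (\<Sum>bs\<in>masks (length vs). dirD v (dirDs (sel bs vs) f) z * dirDs (unsel bs vs) g z
                     + dirDs (sel bs vs) f z * dirD v (dirDs (unsel bs vs) g) z)"
    by (rule dirD_sum_mult[OF finite_masks]) (use parts Cons.prems in auto)
  also have "\<dots> = (\<Sum>bs\<in>masks (length (v # vs)). dirDs (sel bs (v # vs)) f z * dirDs (unsel bs (v # vs)) g z)"
    by (simp add: sum_masks_Suc sum.distrib)
  finally show ?case .
qed (simp add: masks_0)

fun coord_dirs_aux :: "nat \<Rightarrow> ('n::finite \<Rightarrow> 'v) \<Rightarrow> ('n \<Rightarrow> nat) \<Rightarrow> 'v list" where
  "coord_dirs_aux 0 e \<alpha> = []"
| "coord_dirs_aux (Suc k) e \<alpha> =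
     (if \<alpha> = (\<lambda>_. 0) then []
      else (let i = (SOME i. \<alpha> i \<noteq> 0) in e i # coord_dirs_aux k e (\<alpha>(i := \<alpha> i - 1))))"

definition coord_dirs :: "('n::finite \<Rightarrow> 'v) \<Rightarrow> ('n \<Rightarrow> nat) \<Rightarrow> 'v list" where
  "coord_dirs e \<alpha> = coord_dirs_aux (mi_abs \<alpha>) e \<alpha>"

lemma pder_eq_dirDs: "pder e \<alpha> f = dirDs (coord_dirs e \<alpha>) f"
proof -
  have "pder_aux k e \<alpha> f = dirDs (coord_dirs_aux k e \<alpha>) f" for k
    by (induction k arbitrary: \<alpha>) (auto simp: Let_def)
  then show ?thesis unfolding pder_def coord_dirs_def .
qed

lemma mi_abs_eq_0_iff: "mi_abs \<alpha> = 0 \<longleftrightarrow> \<alpha> = (\<lambda>_. 0)"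
  unfolding mi_abs_def by (auto simp: fun_eq_iff)

lemma mi_abs_add: "mi_abs (\<lambda>i. \<alpha> i + \<beta> i) = mi_abs \<alpha> + mi_abs \<beta>"
  unfolding mi_abs_def by (simp add: sum.distrib)

lemma mi_abs_decrement:
  assumes "\<alpha> i \<noteq> 0"
  shows "mi_abs (\<alpha>(i := \<alpha> i - 1)) + 1 = mi_abs \<alpha>"
proof -
  have "mi_abs \<alpha> = \<alpha> i + (\<Sum>j\<in>UNIV - {i}. \<alpha> j)"
    unfolding mi_abs_def by (rule sum.remove) auto
  moreover have "mi_abs (\<alpha>(i := \<alpha> i - 1)) = (\<alpha> i - 1) + (\<Sum>j\<in>UNIV - {i}. \<alpha> j)"
    unfolding mi_abs_def by (subst sum.remove[of _ i]) auto
  ultimately show ?thesis using assms by simp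
qed

lemma coord_dirs_0 [simp]: "coord_dirs e (\<lambda>_. 0) = []"
  by (simp add: coord_dirs_def mi_abs_def)

lemma coord_dirs_Suc:
  assumes "mi_abs \<alpha> = Suc m"
  obtains i where "\<alpha> i \<noteq> 0" "mi_abs (\<alpha>(i := \<alpha> i - 1)) = m"
    "coord_dirs e \<alpha> = e i # coord_dirs e (\<alpha>(i := \<alpha> i - 1))"
proof -
  have nz: "\<alpha> \<noteq> (\<lambda>_. 0)" using mi_abs_eq_0_iff[of \<alpha>] assms by auto
  define i where "i = (SOME i. \<alpha> i \<noteq> 0)"
  have i: "\<alpha> i \<noteq> 0" unfolding i_def by (rule someI_ex) (use nz in auto)
  have m: "mi_abs (\<alpha>(i := \<alpha> i - 1)) = m" using mi_abs_decrement[of \<alpha> i, OF i] assms by simp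
  have "coord_dirs e \<alpha> = e i # coord_dirs_aux m e (\<alpha>(i := \<alpha> i - 1))"
    unfolding coord_dirs_def assms using nz by (simp add: Let_def i_def)
  then show ?thesis using that i m by (simp add: coord_dirs_def)
qed

lemma length_coord_dirs: "length (coord_dirs e \<alpha>) = mi_abs \<alpha>"
proof (induction "mi_abs \<alpha>" arbitrary: \<alpha>)
  case 0
  then show ?case using mi_abs_eq_0_iff[of \<alpha>] by simp
next
  case (Suc m)
  obtain i where "mi_abs (\<alpha>(i := \<alpha> i - 1)) = m"
    "coord_dirs e \<alpha> = e i # coord_dirs e (\<alpha>(i := \<alpha> i - 1))"
    using coord_dirs_Suc[OF Suc.hyps(2)[symmetric]] by blast
  then show ?case using Suc.hyps by simp
qed

lemma set_coord_dirs: "set (coord_dirs e \<alpha>) \<subseteq> range e"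
proof (induction "mi_abs \<alpha>" arbitrary: \<alpha>)
  case 0
  then show ?case using mi_abs_eq_0_iff[of \<alpha>] by simp
next
  case (Suc m)
  obtain i where "mi_abs (\<alpha>(i := \<alpha> i - 1)) = m"
    "coord_dirs e \<alpha> = e i # coord_dirs e (\<alpha>(i := \<alpha> i - 1))"
    using coord_dirs_Suc[OF Suc.hyps(2)[symmetric]] by blast
  then show ?case using Suc.hyps(1)[of "\<alpha>(i := \<alpha> i - 1)"] by simp
qed

lemma count_coord_dirs: "inj e \<Longrightarrow> count (mset (coord_dirs e \<alpha>)) (e j) = \<alpha> j"
proof (induction "mi_abs \<alpha>" arbitrary: \<alpha>)
  case 0
  then show ?case using mi_abs_eq_0_iff[of \<alpha>] by simp
next
  case (Suc m)
  obtain i where i: "\<alpha> i \<noteq> 0" "mi_abs (\<alpha>(i := \<alpha> i - 1)) = m"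
    "coord_dirs e \<alpha> = e i # coord_dirs e (\<alpha>(i := \<alpha> i - 1))"
    using coord_dirs_Suc[OF Suc.hyps(2)[symmetric]] by blast
  then show ?case using Suc.hyps(1)[OF i(2)[symmetric]] Suc.prems by (auto dest: injD)
qed

lemma drop_coord_dirs: "\<exists>\<alpha>'. drop k (coord_dirs e \<alpha>) = coord_dirs e \<alpha>'"
proof (induction "mi_abs \<alpha>" arbitrary: \<alpha> k)
  case 0
  then show ?case using mi_abs_eq_0_iff[of \<alpha>] by (auto intro: exI[of _ "\<lambda>_. 0"])
next
  case (Suc m)
  obtain i where i: "mi_abs (\<alpha>(i := \<alpha> i - 1)) = m"
    "coord_dirs e \<alpha> = e i # coord_dirs e (\<alpha>(i := \<alpha> i - 1))"
    using coord_dirs_Suc[OF Suc.hyps(2)[symmetric]] by blast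
  show ?case
  proof (cases k)
    case (Suc k')
    then show ?thesis using Suc.hyps(1)[OF i(1)[symmetric]] i(2) by simp
  qed (use drop_0 in blast)
qed

definition dx_dir :: "'n::finite \<Rightarrow> (real^'n) \<times> (real^'n)" where
  "dx_dir i = (axis i 1, 0)"

definition dxi_dir :: "'n::finite \<Rightarrow> (real^'n) \<times> (real^'n)" where
  "dxi_dir i = (0, axis i 1)"

definition phase_dirs :: "((real^'n::finite) \<times> (real^'n)) set" where
  "phase_dirs = range dx_dir \<union> range dxi_dir"

text \<open>All \<open>\<xi>\<close>-derivatives first, as in \<open>D\<^sub>\<xi>\<^sup>\<alpha> D\<^sub>x\<^sup>\<beta>\<close>.\<close>
definition phase_canon :: "((real^'n::finite) \<times> (real^'n)) multiset \<Rightarrow> ((real^'n) \<times> (real^'n)) list" where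
  "phase_canon M = coord_dirs dxi_dir (\<lambda>i. count M (dxi_dir i)) @ coord_dirs dx_dir (\<lambda>i. count M (dx_dir i))"

lemma inj_dx_dir: "inj dx_dir"
  unfolding dx_dir_def by (auto intro!: injI simp: axis_eq_axis)

lemma inj_dxi_dir: "inj dxi_dir"
  unfolding dxi_dir_def by (auto intro!: injI simp: axis_eq_axis)

lemma dx_dir_neq_dxi_dir: "dx_dir i \<noteq> dxi_dir j"
  unfolding dx_dir_def dxi_dir_def by simp

lemma coord_dirs_append_in_phase_dirs: "coord_dirs dxi_dir \<alpha> @ coord_dirs dx_dir \<beta> \<in> lists phase_dirs"
  using set_coord_dirs[of dxi_dir \<alpha>] set_coord_dirs[of dx_dir \<beta>] unfolding phase_dirs_def by auto

lemma mset_phase_canon: "set_mset M \<subseteq> phase_dirs \<Longrightarrow> mset (phase_canon M) = M"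
proof -
  assume M: "set_mset M \<subseteq> phase_dirs"
  let ?a = "\<lambda>i. count M (dxi_dir i)" and ?b = "\<lambda>i. count M (dx_dir i)"
  have "count (mset (phase_canon M)) v = count M v" for v
  proof (cases "v \<in> phase_dirs")
    case True
    have "dx_dir j \<notin> set (coord_dirs dxi_dir ?a)" "dxi_dir j \<notin> set (coord_dirs dx_dir ?b)" for j
      using set_coord_dirs[of dxi_dir ?a] set_coord_dirs[of dx_dir ?b]
        dx_dir_neq_dxi_dir dx_dir_neq_dxi_dir[symmetric] by blast+
    then have zero: "count (mset (coord_dirs dxi_dir ?a)) (dx_dir j) = 0"
      "count (mset (coord_dirs dx_dir ?b)) (dxi_dir j) = 0" for j
      by (simp_all add: count_eq_zero_iff)
    show ?thesis using True
      by (auto simp: phase_dirs_def phase_canon_def zero count_coord_dirs inj_dx_dir inj_dxi_dir)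
  next
    case False
    then have "v \<notin> set (phase_canon M)"
      using coord_dirs_append_in_phase_dirs by (auto simp: phase_canon_def)
    moreover have "v \<notin># M" using False M by auto
    ultimately show ?thesis by (simp add: count_mset_0_iff not_in_iff)
  qed
  then show ?thesis by (simp add: multiset_eq_iff)
qed

lemma length_phase_canon: "L \<in> lists phase_dirs \<Longrightarrow> length (phase_canon (mset L)) = length L"
proof -
  assume "L \<in> lists phase_dirs"
  then have "mset (phase_canon (mset L)) = mset L" by (intro mset_phase_canon) auto
  then show ?thesis by (metis size_mset)
qed

lemma Dx_eq_dirDs: "Dx \<beta> f = (\<lambda>z. (- \<i>) ^ mi_abs \<beta> * dirDs (coord_dirs dx_dir \<beta>) f z)"
  unfolding Dx_def[abs_def] pder_eq_dirDs dx_dir_def[abs_def] ..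

lemma Dxi_eq_dirDs: "Dxi \<alpha> g z = (- \<i>) ^ mi_abs \<alpha> * dirDs (coord_dirs dxi_dir \<alpha>) g z"
  unfolding Dxi_def pder_eq_dirDs dxi_dir_def[abs_def] ..

lemma Dxi_Dx_eq_dirDs:
  assumes U: "open U" and x: "x \<in> U"
    and diff: "\<And>k y. 1 \<le> k \<Longrightarrow> k \<le> length (coord_dirs dxi_dir \<alpha>) \<Longrightarrow> y \<in> U \<Longrightarrow>
        dirDs (drop k (coord_dirs dxi_dir \<alpha>)) (dirDs (coord_dirs dx_dir \<beta>) f) differentiable (at y) \<or>
        dirDs (drop k (coord_dirs dxi_dir \<alpha>)) (Dx \<beta> f) differentiable (at y)"
  shows "Dxi \<alpha> (Dx \<beta> f) x =
    (- \<i>) ^ (mi_abs \<alpha> + mi_abs \<beta>) * dirDs (coord_dirs dxi_dir \<alpha> @ coord_dirs dx_dir \<beta>) f x"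
  using dirDs_cmult[OF U _ diff[unfolded Dx_eq_dirDs] x]
  by (simp add: Dxi_eq_dirDs Dx_eq_dirDs dirDs_append power_add)

lemma smooth2_differentiable_dirDs_phase:
  assumes "smooth2 a"
  shows "dirDs (coord_dirs dxi_dir \<alpha> @ coord_dirs dx_dir \<beta>) a differentiable (at x)"
    and "Dxi \<alpha> (Dx \<beta> a) x = (- \<i>) ^ (mi_abs \<alpha> + mi_abs \<beta>) * dirDs (coord_dirs dxi_dir \<alpha> @ coord_dirs dx_dir \<beta>) a x"
proof -
  have "Dxi \<alpha>' (Dx \<beta> a) differentiable (at y)" for \<alpha>' y
    using assms unfolding smooth2_def differentiable_on_def by blast
  then have diff: "(\<lambda>z. c * Dxi \<alpha>' (Dx \<beta> a) z) differentiable (at y)" for c \<alpha>' y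
    by (intro differentiable_mult differentiable_const)
  have "dirDs (drop k (coord_dirs dxi_dir \<alpha>)) (Dx \<beta> a) differentiable (at y)" for k y
  proof -
    obtain \<alpha>' where "drop k (coord_dirs dxi_dir \<alpha>) = coord_dirs dxi_dir \<alpha>'"
      using drop_coord_dirs by blast
    then show ?thesis using diff[of "inverse ((- \<i>) ^ mi_abs \<alpha>')" \<alpha>' y] by (simp add: Dxi_eq_dirDs)
  qed
  then show eq: "Dxi \<alpha> (Dx \<beta> a) x = (- \<i>) ^ (mi_abs \<alpha> + mi_abs \<beta>) * dirDs (coord_dirs dxi_dir \<alpha> @ coord_dirs dx_dir \<beta>) a x"
    for x by (intro Dxi_Dx_eq_dirDs[OF open_UNIV UNIV_I]) blast
  show "dirDs (coord_dirs dxi_dir \<alpha> @ coord_dirs dx_dir \<beta>) a differentiable (at x)"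
    using diff[of "inverse ((- \<i>) ^ (mi_abs \<alpha> + mi_abs \<beta>))" \<alpha> x] by (simp add: eq)
qed

lemma smooth2_dirDs_eq_phase_canon:
  assumes "smooth2 a" "L \<in> lists phase_dirs"
  shows "dirDs L a = dirDs (phase_canon (mset L)) a"
proof (rule dirDs_eq_dirDs_canonical[OF _ _ assms(2)])
  show "mset (phase_canon M) = M" if "set_mset M \<subseteq> phase_dirs" for M
    using mset_phase_canon[OF that] .
  show "dirDs (phase_canon M) a differentiable (at x)" for M x
    unfolding phase_canon_def by (rule smooth2_differentiable_dirDs_phase(1)[OF assms(1)])
qed

lemma smooth2_differentiable_dirDs:
  assumes "smooth2 a" "L \<in> lists phase_dirs"
  shows "dirDs L a differentiable (at x)"
proof -
  have "dirDs (phase_canon (mset L)) a differentiable (at x)"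
    unfolding phase_canon_def by (rule smooth2_differentiable_dirDs_phase(1)[OF assms(1)])
  then show ?thesis by (subst smooth2_dirDs_eq_phase_canon[OF assms])
qed

section \<open>Weight sequences with logarithmically convex \<open>A\<^sub>p / p!\<close>\<close>

locale M4_weight =
  fixes A :: "nat \<Rightarrow> real"
  assumes weight: "weight_seq A" and M4: "cond_M4 A"
begin

definition Af :: "nat \<Rightarrow> real" where
  "Af p = A p / fact p"

lemma A_pos: "A p > 0" and A_0: "A 0 = 1" and A_1: "A 1 = 1"
  using weight unfolding weight_seq_def by auto

lemma Af_pos: "Af p > 0"
  unfolding Af_def using A_pos by simp

lemma Af_0: "Af 0 = 1" and Af_1: "Af (Suc 0) = 1"
  unfolding Af_def using A_0 A_1 by auto

lemma incseq_Af_ratio: "incseq (\<lambda>p. Af (Suc p) / Af p)"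
proof (rule incseq_SucI)
  fix p
  have "Af (Suc p) ^ 2 \<le> Af p * Af (Suc (Suc p))"
    using M4 unfolding cond_M4_def Af_def by (auto elim!: allE[of _ "Suc p"])
  then have "Af (Suc p) * Af (Suc p) \<le> Af p * Af (Suc (Suc p))" by (simp add: power2_eq_square)
  then show "Af (Suc p) / Af p \<le> Af (Suc (Suc p)) / Af (Suc p)"
    using Af_pos[of p] Af_pos[of "Suc p"] by (simp add: divide_simps) (simp add: mult.commute)
qed

lemma Af_mult_Suc_le: "j \<le> k \<Longrightarrow> Af (Suc j) * Af k \<le> Af j * Af (Suc k)"
  using incseq_Af_ratio[unfolded incseq_def, rule_format, of j k] Af_pos[of j] Af_pos[of k]
  by (simp add: divide_simps) (simp add: mult.commute)

lemma Af_mult_le: "Af j * Af k \<le> Af (j + k)"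
proof -
  have "Af j * Af k \<le> Af (j + k)" if "j \<le> k" for j k
    using that
  proof (induction j arbitrary: k)
    case (Suc j)
    have "Af (Suc j) * Af k \<le> Af j * Af (Suc k)" using Af_mult_Suc_le Suc by simp
    also have "\<dots> \<le> Af (j + Suc k)" using Suc.IH[of "Suc k"] Suc.prems by simp
    finally show ?case by simp
  qed (simp add: Af_0)
  note le = this
  show ?thesis
  proof (cases "j \<le> k")
    case False
    then show ?thesis using le[of k j] by (simp add: mult.commute add.commute)
  qed (rule le)
qed

lemma Af_mult_le_pred: "1 \<le> j \<Longrightarrow> 1 \<le> k \<Longrightarrow> Af j * Af k \<le> Af (j + k - 1)"
proof -
  have "Af (Suc i) * Af k \<le> Af (i + k)" if "Suc i \<le> k" for i k
    using that
  proof (induction i arbitrary: k)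
    case (Suc i)
    have "Af (Suc (Suc i)) * Af k \<le> Af (Suc i) * Af (Suc k)" using Af_mult_Suc_le Suc by simp
    also have "\<dots> \<le> Af (i + Suc k)" using Suc.IH[of "Suc k"] Suc.prems by simp
    finally show ?case by simp
  qed (simp add: Af_1)
  note le = this
  assume "1 \<le> j" "1 \<le> k"
  then obtain j' k' where jk: "j = Suc j'" "k = Suc k'" by (metis Suc_le_D One_nat_def)
  show ?thesis
  proof (cases "j \<le> k")
    case True
    then show ?thesis using le[of j' k] jk by simp
  next
    case False
    then show ?thesis using le[of k' j] jk by (simp add: ac_simps)
  qed
qed

lemma binomial_A_eq:
  assumes "j \<le> n"
  shows "real (n choose j) * A j * A (n - j) = Af j * Af (n - j) / Af n * A n"
proof -
  have "fact j * fact (n - j) * real (n choose j) = fact n"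
    using assms by (metis binomial_fact_lemma of_nat_fact of_nat_mult)
  moreover have "A j = Af j * fact j" "A (n - j) = Af (n - j) * fact (n - j)" "A n = Af n * fact n"
    unfolding Af_def by auto
  ultimately show ?thesis using Af_pos[of n] by (simp add: field_simps)
qed

lemma binomial_A_le:
  assumes "j \<le> n"
  shows "real (n choose j) * A j * A (n - j) \<le> A n"
proof -
  have "Af j * Af (n - j) / Af n \<le> 1" using Af_mult_le[of j "n - j"] assms Af_pos[of n] by simp
  then have "Af j * Af (n - j) / Af n * A n \<le> 1 * A n" using A_pos[of n] by (intro mult_right_mono) auto
  then show ?thesis using binomial_A_eq[OF assms] by simp
qed

lemma binomial_A_le_ratio:
  assumes "1 \<le> j" "j < n"
  shows "real (n choose j) * A j * A (n - j) \<le> Af (n - 1) / Af n * A n"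
proof -
  have "Af j * Af (n - j) \<le> Af (n - 1)" using Af_mult_le_pred[of j "n - j"] assms by simp
  then show ?thesis using binomial_A_eq[of j n] assms Af_pos[of n] A_pos[of n]
    by (simp add: divide_simps)
qed

lemma A_mult_le: "A j * A k \<le> A (j + k)"
proof -
  have "1 * (A j * A k) \<le> real ((j + k) choose j) * (A j * A k)"
    using A_pos[of j] A_pos[of k] by (intro mult_right_mono) (auto simp: Suc_le_eq)
  also have "\<dots> \<le> A (j + k)" using binomial_A_le[of j "j + k"] by (simp add: mult.assoc)
  finally show ?thesis by simp
qed

text \<open>Under (M.3)' the ratio \<open>Af (n - 1) / Af n = n A\<^sub>n\<^sub>-\<^sub>1 / A\<^sub>n\<close> tends to \<open>0\<close>: it is
  decreasing, and a positive lower bound would make \<open>\<Sum> A\<^sub>n\<^sub>-\<^sub>1 / A\<^sub>n\<close> dominate the harmonic series.\<close>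
lemma eventually_Af_ratio_le:
  assumes M3': "cond_M3' A" and e: "e > 0"
  shows "\<exists>N. \<forall>n\<ge>N. Af (n - 1) / Af n \<le> e"
proof (rule ccontr)
  assume "\<not> ?thesis"
  then have large: "\<forall>N. \<exists>n\<ge>N. Af (n - 1) / Af n > e" by (auto simp: not_le)
  have all: "e < Af k / Af (Suc k)" for k
  proof -
    obtain n where n: "n \<ge> Suc k" "Af (n - 1) / Af n > e" using large by blast
    then obtain m where m: "Suc m \<ge> Suc k" "Af m / Af (Suc m) > e" by (cases n) auto
    have "Af (Suc k) / Af k \<le> Af (Suc m) / Af m"
      using incseq_Af_ratio m(1) unfolding incseq_def by simp
    then have "Af m / Af (Suc m) \<le> Af k / Af (Suc k)"
      using Af_pos[of k] Af_pos[of m] Af_pos[of "Suc k"] Af_pos[of "Suc m"]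
      by (simp add: divide_simps mult.commute)
    then show ?thesis using m by simp
  qed
  have "A k / A (k + 1) = (Af k / Af (Suc k)) / real (Suc k)" for k
    using A_pos[of k] A_pos[of "Suc k"] by (simp add: Af_def fact_Suc divide_simps)
  then have "summable (\<lambda>k. (Af k / Af (Suc k)) / real (Suc k))"
    using M3' unfolding cond_M3'_def by simp
  moreover have "norm (e * inverse (real (Suc k))) \<le> (Af k / Af (Suc k)) / real (Suc k)" for k
  proof -
    have "e / real (Suc k) \<le> (Af k / Af (Suc k)) / real (Suc k)"
      using all[of k] by (intro divide_right_mono) auto
    then show ?thesis using e by (simp add: divide_inverse)
  qed
  ultimately have "summable (\<lambda>k. e * inverse (real (Suc k)))"
    by (rule summable_comparison_test'[of _ 0])
  then have "summable (\<lambda>k. inverse (real k))"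
    using e summable_Suc_iff[of "\<lambda>k. inverse (real k)"] by simp
  then show False using not_summable_harmonic[where 'a=real] by simp
qed

definition leib_coeff :: "nat \<Rightarrow> nat \<Rightarrow> real" where
  "leib_coeff n j = real (n choose j) * A j * A (n - j) / A n"

lemma leib_coeff_le_1: "j \<le> n \<Longrightarrow> leib_coeff n j \<le> 1"
  using binomial_A_le[of j n] A_pos[of n] unfolding leib_coeff_def by (simp add: divide_simps)

lemma leib_coeff_diag: "leib_coeff n n = 1"
  using A_pos[of n] A_0 unfolding leib_coeff_def by simp

lemma leib_coeff_le_ratio: "1 \<le> j \<Longrightarrow> j < n \<Longrightarrow> leib_coeff n j \<le> Af (n - 1) / Af n"
  using binomial_A_le_ratio[of j n] A_pos[of n] unfolding leib_coeff_def by (simp add: divide_simps)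

lemma eventually_weighted_leib_coeff_sum_le_1:
  assumes M3': "cond_M3' A" and C: "C > 0"
  shows "\<exists>N. \<forall>n\<ge>N. C * (\<Sum>j<n. leib_coeff n (Suc j) * (1/2) ^ Suc j) \<le> 1"
proof -
  obtain N1 where N1: "\<And>n. n \<ge> N1 \<Longrightarrow> Af (n - 1) / Af n \<le> 1 / (2 * C)"
    using eventually_Af_ratio_le[OF M3', of "1 / (2 * C)"] C by auto
  obtain N2 where N2: "2 * C < 2 ^ N2" using real_arch_pow[of 2 "2 * C"] by auto
  have "C * (\<Sum>j<n. leib_coeff n (Suc j) * (1/2) ^ Suc j) \<le> 1" if n: "n \<ge> Suc (max N1 N2)" for n
  proof -
    obtain m where m: "n = Suc m" using n by (cases n) auto
    have "(\<Sum>j<m. leib_coeff n (Suc j) * (1/2) ^ Suc j) \<le> (\<Sum>j<m. 1 / (2 * C) * (1/2) ^ Suc j)"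
    proof (intro sum_mono mult_right_mono)
      fix j assume "j \<in> {..<m}"
      then have "leib_coeff n (Suc j) \<le> Af (n - 1) / Af n" using leib_coeff_le_ratio[of "Suc j" n] m by simp
      also have "\<dots> \<le> 1 / (2 * C)" using N1 n by simp
      finally show "leib_coeff n (Suc j) \<le> 1 / (2 * C)" .
    qed simp
    also have "\<dots> = 1 / (4 * C) * (\<Sum>j<m. (1/2::real) ^ j)"
      by (simp add: sum_distrib_left)
    also have "\<dots> \<le> 1 / (2 * C)"
      using geometric_sum_less[of "1/2::real" "{..<m}"] C by (simp add: field_simps)
    finally have "C * (\<Sum>j<m. leib_coeff n (Suc j) * (1/2) ^ Suc j) \<le> 1 / 2"
      using C by (simp add: field_simps)
    moreover have "C * (1/2::real) ^ n \<le> 1 / 2"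
    proof -
      have "(2::real) ^ N2 \<le> 2 ^ n" using n by (intro power_increasing) auto
      then have "2 * C \<le> 2 ^ n" using N2 by linarith
      then show ?thesis by (simp add: power_one_over field_simps)
    qed
    ultimately show ?thesis using m by (simp add: leib_coeff_diag distrib_left)
  qed
  then show ?thesis by blast
qed

end

section \<open>A recursive estimate with geometric solution\<close>

lemma sum_geometric_increments:
  fixes C h :: real
  shows "(\<Sum>j<n. C * h ^ Suc j * (h * (1 + C)) ^ (n - Suc j)) = (h * (1 + C)) ^ n - h ^ n"
proof -
  have "(h * (1 + C)) ^ n - h ^ n = - (h ^ n - (h * (1 + C)) ^ n)" by simp
  also have "\<dots> = C * h * (\<Sum>j<n. (h * (1 + C)) ^ (n - Suc j) * h ^ j)"
    unfolding power_diff_sumr2[of h n] by (simp add: algebra_simps)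
  also have "\<dots> = (\<Sum>j<n. C * h ^ Suc j * (h * (1 + C)) ^ (n - Suc j))"
    by (simp add: sum_distrib_left algebra_simps)
  finally show ?thesis by simp
qed

lemma sum_halving_powers:
  fixes b :: "nat \<Rightarrow> real"
  shows "(\<Sum>j<n. b j * C * h ^ Suc j * (K * (2 * h) ^ (n - Suc j)))
       = K * (2 * h) ^ n * (C * (\<Sum>j<n. b j * (1/2) ^ Suc j))"
proof -
  have "b j * C * h ^ Suc j * (K * (2 * h) ^ (n - Suc j)) = K * (2 * h) ^ n * (C * (b j * (1/2) ^ Suc j))"
    if "j < n" for j
  proof -
    have "n = Suc j + (n - Suc j)" using that by simp
    then have "(2 * h) ^ n = (2 * h) ^ Suc j * (2 * h) ^ (n - Suc j)"
      by (metis power_add)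
    moreover have "h ^ Suc j = (2 * h) ^ Suc j * (1/2) ^ Suc j"
      unfolding power_mult_distrib[symmetric] by simp
    ultimately show ?thesis by (simp only: mult_ac)
  qed
  then have "(\<Sum>j<n. b j * C * h ^ Suc j * (K * (2 * h) ^ (n - Suc j)))
      = (\<Sum>j<n. K * (2 * h) ^ n * (C * (b j * (1/2) ^ Suc j)))"
    by (intro sum.cong) simp_all
  also have "\<dots> = K * (2 * h) ^ n * (C * (\<Sum>j<n. b j * (1/2) ^ Suc j))"
    by (simp only: sum_distrib_left)
  finally show ?thesis .
qed

context M4_weight
begin

text \<open>\<open>P n K\<close> stands for ``derivatives of order \<open>n\<close> obey the estimate with constant \<open>K\<close>''; the
  hypothesis \<open>step\<close> is the shape of the bound produced by the Leibniz rule.\<close>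
lemma recursive_bound_crude:
  assumes C: "C > 0" and h: "h > 0"
    and mono: "\<And>n K K'. P n K \<Longrightarrow> K \<le> K' \<Longrightarrow> P n K'"
    and P0: "P 0 1"
    and step: "\<And>n Kf. n \<ge> 1 \<Longrightarrow> (\<forall>m<n. P m (Kf m)) \<Longrightarrow>
                  P n (\<Sum>j<n. leib_coeff n (Suc j) * C * h ^ Suc j * Kf (n - Suc j))"
  shows "P n ((h * (1 + C)) ^ n)"
proof (induction n rule: less_induct)
  case (less n)
  let ?G = "h * (1 + C)"
  show ?case
  proof (cases "n = 0")
    case False
    have "(\<Sum>j<n. leib_coeff n (Suc j) * C * h ^ Suc j * ?G ^ (n - Suc j))
        \<le> (\<Sum>j<n. C * h ^ Suc j * ?G ^ (n - Suc j))"
      using leib_coeff_le_1 C h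
      by (intro sum_mono) (simp add: mult.assoc mult_left_le_one_le zero_le_mult_iff)
    also have "\<dots> \<le> ?G ^ n" unfolding sum_geometric_increments using h by simp
    finally show ?thesis
      using False less by (intro mono[OF step[of n "\<lambda>m. ?G ^ m"]]) auto
  qed (use P0 in simp)
qed

lemma recursive_bound_geometric:
  assumes M3': "cond_M3' A" and C: "C > 0" and h: "h > 0"
    and mono: "\<And>n K K'. P n K \<Longrightarrow> K \<le> K' \<Longrightarrow> P n K'"
    and P0: "P 0 1"
    and step: "\<And>n Kf. n \<ge> 1 \<Longrightarrow> (\<forall>m<n. P m (Kf m)) \<Longrightarrow>
                  P n (\<Sum>j<n. leib_coeff n (Suc j) * C * h ^ Suc j * Kf (n - Suc j))"
  shows "\<exists>K>0. \<forall>n. P n (K * (2 * h) ^ n)"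
proof -
  obtain N where N: "\<And>n. n \<ge> N \<Longrightarrow> C * (\<Sum>j<n. leib_coeff n (Suc j) * (1/2) ^ Suc j) \<le> 1"
    using eventually_weighted_leib_coeff_sum_le_1[OF M3' C] by blast
  have crude: "P m ((h * (1 + C)) ^ m)" for m
    using C h mono P0 step by (rule recursive_bound_crude)
  define K where "K = max 1 ((1 + C) ^ N)"
  have K: "K \<ge> 1" "K \<ge> (1 + C) ^ N" by (auto simp: K_def)
  have "P n (K * (2 * h) ^ n)" for n
  proof (induction n rule: less_induct)
    case (less n)
    show ?case
    proof (cases "n < N")
      case True
      have "h ^ n \<le> (2 * h) ^ n" using h by (intro power_mono) auto
      moreover have "(1 + C) ^ n \<le> (1 + C) ^ N" using True C by (intro power_increasing) auto
      ultimately have "(h * (1 + C)) ^ n \<le> (2 * h) ^ n * (1 + C) ^ N"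
        unfolding power_mult_distrib using C h by (intro mult_mono) auto
      also have "\<dots> \<le> K * (2 * h) ^ n" using K h by (simp add: mult.commute)
      finally show ?thesis using mono[OF crude] by blast
    next
      case False
      show ?thesis
      proof (cases "n = 0")
        case False
        have "(\<Sum>j<n. leib_coeff n (Suc j) * C * h ^ Suc j * (K * (2 * h) ^ (n - Suc j)))
            = K * (2 * h) ^ n * (C * (\<Sum>j<n. leib_coeff n (Suc j) * (1/2) ^ Suc j))"
          by (rule sum_halving_powers)
        also have "\<dots> \<le> K * (2 * h) ^ n"
          using N[of n] \<open>\<not> n < N\<close> K h by (intro mult_left_le) auto
        finally show ?thesis
          using False less by (intro mono[OF step[of n "\<lambda>m. K * (2 * h) ^ m"]]) auto
      qed (use mono[OF P0] K in simp)
    qed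
  qed
  then show ?thesis using K by (intro exI[of _ K]) auto
qed

end

section \<open>Derivatives of the inverse of a function\<close>

lemma dirDs_inverse_recursion:
  fixes a :: "'v::real_normed_vector \<Rightarrow> complex"
  assumes da: "\<And>L x. L \<in> lists E \<Longrightarrow> dirDs L a differentiable (at x)"
    and U: "open U" and nz: "\<And>x. x \<in> U \<Longrightarrow> a x \<noteq> 0"
    and dp: "\<And>ws y. ws \<in> lists E \<Longrightarrow> length ws < length vs \<Longrightarrow> y \<in> U \<Longrightarrow>
               dirDs ws (\<lambda>x. inverse (a x)) differentiable (at y)"
    and vs: "vs \<in> lists E" "vs \<noteq> []" and x: "x \<in> U"
  shows "dirDs vs (\<lambda>x. inverse (a x)) x = - inverse (a x) *
     (\<Sum>bs\<in>masks (length vs) - {replicate (length vs) False}.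
        dirDs (sel bs vs) a x * dirDs (unsel bs vs) (\<lambda>x. inverse (a x)) x)"
proof -
  let ?p = "\<lambda>x. inverse (a x)"
  let ?F = "\<lambda>bs. dirDs (sel bs vs) a x * dirDs (unsel bs vs) ?p x"
  let ?none = "replicate (length vs) False"
  have "(\<Sum>bs\<in>masks (length vs). ?F bs) = dirDs vs (\<lambda>x. a x * ?p x) x"
    by (rule dirDs_mult[OF U _ dp vs(1) x, symmetric]) (use da in auto)
  also have "\<dots> = dirDs vs (\<lambda>_. 1) x"
    by (rule dirDs_cong_open[OF U _ x]) (use nz in simp)
  also have "\<dots> = 0" using dirDs_const[OF vs(2)] by simp
  finally have "?F ?none + (\<Sum>bs\<in>masks (length vs) - {?none}. ?F bs) = 0"
    using sum.remove[OF finite_masks, of ?none "length vs" ?F] by (simp add: masks_def)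
  moreover have "?F ?none = a x * dirDs vs ?p x" using sel_unsel_all_False[of vs "length vs"] by simp
  ultimately show ?thesis using nz[OF x] by (simp add: field_simps eq_neg_iff_add_eq_0)
qed

lemma dirDs_inverse_differentiable:
  fixes a :: "'v::real_normed_vector \<Rightarrow> complex"
  assumes da: "\<And>L x. L \<in> lists E \<Longrightarrow> dirDs L a differentiable (at x)"
    and U: "open U" and nz: "\<And>x. x \<in> U \<Longrightarrow> a x \<noteq> 0"
  shows "ws \<in> lists E \<Longrightarrow> y \<in> U \<Longrightarrow> dirDs ws (\<lambda>x. inverse (a x)) differentiable (at y)"
proof (induction "length ws" arbitrary: ws y rule: less_induct)
  case less
  let ?p = "\<lambda>x. inverse (a x)"
  let ?R = "masks (length ws) - {replicate (length ws) False}"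
  have a_diff: "a differentiable (at y)" using da[of "[]" y] by simp
  show ?case
  proof (cases "ws = []")
    case False
    have eq: "- inverse (a x) * (\<Sum>bs\<in>?R. dirDs (sel bs ws) a x * dirDs (unsel bs ws) ?p x) = dirDs ws ?p x"
      if "x \<in> U" for x
      using dirDs_inverse_recursion[OF da U nz _ less.prems(1) False that] less.hyps by simp
    have "(\<lambda>x. dirDs (sel bs ws) a x * dirDs (unsel bs ws) ?p x) differentiable (at y)"
      if bs: "bs \<in> ?R" for bs
    proof -
      have l: "length bs = length ws" using bs by (simp add: masks_def)
      then have len: "length (unsel bs ws) < length ws"
        using length_sel_unsel[OF l] ntrue_pos[OF l] bs False by auto
      have "sel bs ws \<in> lists E" "unsel bs ws \<in> lists E"
        using set_sel_unsel[of bs ws] less.prems(1) by auto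
      then show ?thesis
        using da less.hyps[OF len _ less.prems(2)] by (intro differentiable_mult) auto
    qed
    then have "(\<lambda>x. - inverse (a x) * (\<Sum>bs\<in>?R. dirDs (sel bs ws) a x * dirDs (unsel bs ws) ?p x))
        differentiable (at y)"
      using a_diff nz[OF less.prems(2)] finite_masks
      by (intro differentiable_mult differentiable_minus differentiable_inverse differentiable_sum) auto
    from differentiable_open_cong[OF U less.prems(2) eq this] show ?thesis .
  qed (use a_diff nz[OF less.prems(2)] in simp)
qed

definition dirDs_est :: "'v::real_normed_vector set \<Rightarrow> ('v \<Rightarrow> complex) \<Rightarrow> (nat \<Rightarrow> real) \<Rightarrow> real
    \<Rightarrow> real \<Rightarrow> 'v \<Rightarrow> nat \<Rightarrow> real \<Rightarrow> bool" where
  "dirDs_est E p A \<rho> w z n K \<longleftrightarrow> (\<forall>L\<in>lists E. length L = n \<longrightarrow>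
      norm (dirDs L p z) \<le> K * norm (p z) * A n / w powr (\<rho> * real n))"

lemma dirDs_est_mono:
  "dirDs_est E p A \<rho> w z n K \<Longrightarrow> K \<le> K' \<Longrightarrow> A n > 0 \<Longrightarrow> dirDs_est E p A \<rho> w z n K'"
  unfolding dirDs_est_def
proof (intro ballI impI)
  fix L assume "\<forall>L\<in>lists E. length L = n \<longrightarrow> norm (dirDs L p z) \<le> K * norm (p z) * A n / w powr (\<rho> * real n)"
    "L \<in> lists E" "length L = n" "K \<le> K'" "A n > 0"
  then have "norm (dirDs L p z) \<le> K * norm (p z) * A n / w powr (\<rho> * real n)" by blast
  also have "\<dots> = K * (norm (p z) * A n / w powr (\<rho> * real n))" by simp
  also have "\<dots> \<le> K' * (norm (p z) * A n / w powr (\<rho> * real n))"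
    using \<open>K \<le> K'\<close> \<open>A n > 0\<close> by (intro mult_right_mono) auto
  finally show "norm (dirDs L p z) \<le> K' * norm (p z) * A n / w powr (\<rho> * real n)" by simp
qed

lemma leibniz_summand_eq:
  fixes na np w \<rho> C h Kf :: real
  assumes "na * np = 1" "w > 0" "k \<le> n" "An > 0"
  shows "np * (real (n choose k) * ((C * h ^ k * na * Ak / w powr (\<rho> * real k)) *
           (Kf * np * Ank / w powr (\<rho> * real (n - k)))))
       = real (n choose k) * Ak * Ank / An * C * h ^ k * Kf * np * An / w powr (\<rho> * real n)"
proof -
  have "w powr (\<rho> * real k) * w powr (\<rho> * real (n - k)) = w powr (\<rho> * real n)"
    using assms(3) by (simp add: powr_add[symmetric] of_nat_diff algebra_simps)
  moreover have "w powr (\<rho> * real k) > 0" "w powr (\<rho> * real (n - k)) > 0" using assms(2) by auto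
  ultimately show ?thesis using assms(1,4) by (simp add: field_simps)
qed

lemma (in M4_weight) dirDs_inverse_est_step:
  fixes a :: "'v::real_normed_vector \<Rightarrow> complex"
  assumes da: "\<And>L x. L \<in> lists E \<Longrightarrow> dirDs L a differentiable (at x)"
    and U: "open U" and nz: "\<And>x. x \<in> U \<Longrightarrow> a x \<noteq> 0" and z: "z \<in> U" and w: "w > 0"
    and a_est: "\<And>L. L \<in> lists E \<Longrightarrow>
       norm (dirDs L a z) \<le> C * h ^ length L * norm (a z) * A (length L) / w powr (\<rho> * real (length L))"
    and n: "n \<ge> 1" and IH: "\<And>m. m < n \<Longrightarrow> dirDs_est E (\<lambda>x. inverse (a x)) A \<rho> w z m (Kf m)"
  shows "dirDs_est E (\<lambda>x. inverse (a x)) A \<rho> w z n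
           (\<Sum>j<n. leib_coeff n (Suc j) * C * h ^ Suc j * Kf (n - Suc j))"
  unfolding dirDs_est_def
proof (intro ballI impI)
  fix L assume L: "L \<in> lists E" and len: "length L = n"
  let ?p = "\<lambda>x. inverse (a x)"
  let ?R = "masks n - {replicate n False}"
  let ?F = "\<lambda>bs. dirDs (sel bs L) a z * dirDs (unsel bs L) ?p z"
  let ?T = "\<lambda>j. (C * h ^ j * norm (a z) * A j / w powr (\<rho> * real j)) *
                 (Kf (n - j) * norm (?p z) * A (n - j) / w powr (\<rho> * real (n - j)))"
  have dp: "dirDs ws ?p differentiable (at y)" if "ws \<in> lists E" "y \<in> U" for ws y
    using dirDs_inverse_differentiable[OF da U nz that] .
  have rec: "dirDs L ?p z = - ?p z * (\<Sum>bs\<in>?R. ?F bs)"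
  proof -
    have "L \<noteq> []" using len n by auto
    then show ?thesis using dirDs_inverse_recursion[OF da U nz dp L _ z] len by simp
  qed
  have F_le: "norm (?F bs) \<le> (if ntrue bs = 0 then 0 else ?T (ntrue bs))" if bs: "bs \<in> ?R" for bs
  proof -
    have l: "length bs = length L" using bs len by (simp add: masks_def)
    have c: "ntrue bs \<ge> 1" using ntrue_pos[OF l] bs len by simp
    have sl: "length (sel bs L) = ntrue bs" "length (unsel bs L) = n - ntrue bs"
      using length_sel_unsel[OF l] len by auto
    have sE: "sel bs L \<in> lists E" "unsel bs L \<in> lists E" using set_sel_unsel[of bs L] L by auto
    have b1: "norm (dirDs (sel bs L) a z) \<le> C * h ^ ntrue bs * norm (a z) * A (ntrue bs) / w powr (\<rho> * real (ntrue bs))"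
      using a_est[OF sE(1)] sl by simp
    have b2: "norm (dirDs (unsel bs L) ?p z) \<le> Kf (n - ntrue bs) * norm (?p z) * A (n - ntrue bs) / w powr (\<rho> * real (n - ntrue bs))"
      using IH[of "n - ntrue bs"] c n sE(2) sl unfolding dirDs_est_def by auto
    have "norm (?F bs) \<le> ?T (ntrue bs)" unfolding norm_mult
      by (rule mult_mono[OF b1 b2]) (use b1 in \<open>auto intro: order_trans[OF norm_ge_zero]\<close>)
    then show ?thesis using c by simp
  qed
  have "norm (dirDs L ?p z) = norm (?p z) * norm (\<Sum>bs\<in>?R. ?F bs)" unfolding rec by (simp add: norm_mult)
  also have "\<dots> \<le> norm (?p z) * (\<Sum>bs\<in>?R. if ntrue bs = 0 then 0 else ?T (ntrue bs))"
    by (intro mult_left_mono order_trans[OF norm_sum] sum_mono F_le) auto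
  also have "(\<Sum>bs\<in>?R. if ntrue bs = 0 then 0 else ?T (ntrue bs))
      = (\<Sum>j<n. real (n choose Suc j) * ?T (Suc j))"
    using sum_nonempty_masks_ntrue[of "\<lambda>j. if j = 0 then 0 else ?T j" n] by simp
  also have "norm (?p z) * \<dots> =
      (\<Sum>j<n. leib_coeff n (Suc j) * C * h ^ Suc j * Kf (n - Suc j) * norm (?p z) * A n / w powr (\<rho> * real n))"
    unfolding sum_distrib_left
  proof (rule sum.cong[OF refl])
    fix j assume "j \<in> {..<n}"
    moreover have "norm (a z) * norm (?p z) = 1" using nz[OF z] by (simp add: norm_inverse)
    ultimately show "norm (?p z) * (real (n choose Suc j) * ?T (Suc j)) =
      leib_coeff n (Suc j) * C * h ^ Suc j * Kf (n - Suc j) * norm (?p z) * A n / w powr (\<rho> * real n)"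
      unfolding leib_coeff_def using w A_pos by (intro leibniz_summand_eq) auto
  qed
  finally show "norm (dirDs L ?p z) \<le> (\<Sum>j<n. leib_coeff n (Suc j) * C * h ^ Suc j * Kf (n - Suc j)) *
      norm (?p z) * A n / w powr (\<rho> * real n)"
    by (simp add: sum_distrib_right sum_divide_distrib)
qed

lemma (in M4_weight) dirDs_inverse_est:
  fixes a :: "'v::real_normed_vector \<Rightarrow> complex"
  assumes M3': "cond_M3' A"
    and da: "\<And>L x. L \<in> lists E \<Longrightarrow> dirDs L a differentiable (at x)"
    and U: "open U" and nz: "\<And>x. x \<in> U \<Longrightarrow> a x \<noteq> 0" and SU: "S \<subseteq> U"
    and w: "\<And>z. z \<in> S \<Longrightarrow> w z > 0" and C: "C > 0" and h: "h > 0"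
    and a_est: "\<And>L z. L \<in> lists E \<Longrightarrow> z \<in> S \<Longrightarrow> norm (dirDs L a z)
        \<le> C * h ^ length L * norm (a z) * A (length L) / w z powr (\<rho> * real (length L))"
  shows "\<exists>K>0. \<forall>n. \<forall>z\<in>S. dirDs_est E (\<lambda>x. inverse (a x)) A \<rho> (w z) z n (K * (2 * h) ^ n)"
proof (rule recursive_bound_geometric[OF M3' C h])
  show "\<forall>z\<in>S. dirDs_est E (\<lambda>x. inverse (a x)) A \<rho> (w z) z n K'"
    if "\<forall>z\<in>S. dirDs_est E (\<lambda>x. inverse (a x)) A \<rho> (w z) z n K" "K \<le> K'" for n K K'
    using that dirDs_est_mono A_pos by blast
  show "\<forall>z\<in>S. dirDs_est E (\<lambda>x. inverse (a x)) A \<rho> (w z) z 0 1"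
  proof
    fix z assume "z \<in> S"
    then have "w z \<noteq> 0" using w by force
    then show "dirDs_est E (\<lambda>x. inverse (a x)) A \<rho> (w z) z 0 1" by (simp add: dirDs_est_def A_0)
  qed
  show "\<forall>z\<in>S. dirDs_est E (\<lambda>x. inverse (a x)) A \<rho> (w z) z n
          (\<Sum>j<n. leib_coeff n (Suc j) * C * h ^ Suc j * Kf (n - Suc j))"
    if "n \<ge> 1" "\<forall>m<n. \<forall>z\<in>S. dirDs_est E (\<lambda>x. inverse (a x)) A \<rho> (w z) z m (Kf m)" for n Kf
    using that SU w a_est by (intro ballI dirDs_inverse_est_step[OF da U nz]) auto
qed

lemma smooth2_dirDs_bound:
  fixes a :: "(real^'n::finite) \<times> (real^'n) \<Rightarrow> complex"
  assumes sm: "smooth2 a" and L: "L \<in> lists phase_dirs" and A: "M4_weight A"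
    and est: "deriv_est A \<rho> B h C a" and z: "z \<in> QBc B" and C: "C \<ge> 0" and h: "h \<ge> 0"
  shows "norm (dirDs L a z) \<le> C * h ^ length L * norm (a z) * A (length L) / jbr z powr (\<rho> * real (length L))"
proof -
  define \<alpha> where "\<alpha> = (\<lambda>i. count (mset L) (dxi_dir i))"
  define \<beta> where "\<beta> = (\<lambda>i. count (mset L) (dx_dir i))"
  have canon: "phase_canon (mset L) = coord_dirs dxi_dir \<alpha> @ coord_dirs dx_dir \<beta>"
    unfolding phase_canon_def \<alpha>_def \<beta>_def ..
  have len: "mi_abs \<alpha> + mi_abs \<beta> = length L"
    using length_phase_canon[OF L] by (simp add: canon length_coord_dirs)
  have "norm (dirDs L a z) = norm (Dxi \<alpha> (Dx \<beta> a) z)"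
    using smooth2_dirDs_eq_phase_canon[OF sm L] smooth2_differentiable_dirDs_phase(2)[OF sm]
    by (simp add: canon norm_mult norm_power)
  also have "\<dots> \<le> C * h ^ length L * norm (a z) * A (mi_abs \<alpha>) * A (mi_abs \<beta>)
        / jbr z powr (\<rho> * real (length L))"
    using est z len unfolding deriv_est_def by metis
  also have "\<dots> \<le> C * h ^ length L * norm (a z) * A (length L) / jbr z powr (\<rho> * real (length L))"
    using M4_weight.A_mult_le[OF A, of "mi_abs \<alpha>" "mi_abs \<beta>"] len C h
    by (simp add: divide_right_mono mult.assoc mult_left_mono)
  finally show ?thesis .
qed

lemma Dxi_Dx_inverse_eq:
  fixes a :: "(real^'n::finite) \<times> (real^'n) \<Rightarrow> complex"
  assumes sm: "smooth2 a" and U: "open U" and nz: "\<And>x. x \<in> U \<Longrightarrow> a x \<noteq> 0" and z: "z \<in> U"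
  shows "norm (Dxi \<alpha> (Dx \<beta> (\<lambda>z. inverse (a z))) z)
       = norm (dirDs (coord_dirs dxi_dir \<alpha> @ coord_dirs dx_dir \<beta>) (\<lambda>z. inverse (a z)) z)"
proof -
  let ?p = "\<lambda>z. inverse (a z)"
  have "dirDs (drop k (coord_dirs dxi_dir \<alpha>) @ coord_dirs dx_dir \<beta>) ?p differentiable (at y)"
    if "y \<in> U" for k y
    using coord_dirs_append_in_phase_dirs[of \<alpha> \<beta>] set_drop_subset[of k "coord_dirs dxi_dir \<alpha>"]
    by (intro dirDs_inverse_differentiable[OF smooth2_differentiable_dirDs[OF sm] U nz _ that]) auto
  then have "Dxi \<alpha> (Dx \<beta> ?p) z = (- \<i>) ^ (mi_abs \<alpha> + mi_abs \<beta>) * dirDs (coord_dirs dxi_dir \<alpha> @ coord_dirs dx_dir \<beta>) ?p z"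
    by (intro Dxi_Dx_eq_dirDs[OF U z]) (simp add: dirDs_append)
  then show ?thesis by (simp add: norm_mult norm_power)
qed

definition inverse_est :: "(nat \<Rightarrow> real) \<Rightarrow> real \<Rightarrow> real
    \<Rightarrow> ((real^'n::finite) \<times> (real^'n) \<Rightarrow> complex) \<Rightarrow> real \<Rightarrow> real \<Rightarrow> bool" where
  "inverse_est A \<rho> B a h C \<longleftrightarrow> (\<forall>\<alpha> \<beta> z. z \<in> QBc B \<longrightarrow>
     norm (Dxi \<alpha> (Dx \<beta> (\<lambda>z. inverse (a z))) z) \<le>
       C * h ^ (mi_abs \<alpha> + mi_abs \<beta>) * norm (inverse (a z)) * A (mi_abs (\<lambda>i. \<alpha> i + \<beta> i))
       / jbr z powr (\<rho> * real (mi_abs \<alpha> + mi_abs \<beta>)))"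

lemma inverse_symbol_est:
  fixes a :: "(real^'n::finite) \<times> (real^'n) \<Rightarrow> complex"
  assumes sm: "smooth2 a" and A: "M4_weight A" and M3': "cond_M3' A"
    and est: "deriv_est A \<rho> B' h C a" and h: "h > 0" and C: "C > 0"
    and nz: "\<And>z. z \<in> QBc B \<Longrightarrow> a z \<noteq> 0" and B: "B' \<le> B"
  shows "\<exists>K>0. inverse_est A \<rho> B a (2 * h) K"
proof -
  define U where "U = {x. a x \<noteq> 0}"
  have "continuous_on UNIV a"
    using smooth2_differentiable_dirDs[OF sm, of "[]"]
    by (simp add: differentiable_at_imp_differentiable_on differentiable_imp_continuous_on)
  then have U: "open U" unfolding U_def by (rule open_Collect_neq) simp
  have QU: "QBc B \<subseteq> U" using nz by (auto simp: U_def)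
  have "QBc B \<subseteq> QBc B'" using B by (auto simp: QBc_def)
  then have a_est: "norm (dirDs L a z)
      \<le> C * h ^ length L * norm (a z) * A (length L) / jbr z powr (\<rho> * real (length L))"
    if "L \<in> lists phase_dirs" "z \<in> QBc B" for L z
    using smooth2_dirDs_bound[OF sm that(1) A est _ less_imp_le[OF C] less_imp_le[OF h]] that(2)
      \<open>QBc B \<subseteq> QBc B'\<close> by blast
  have "\<exists>K>0. \<forall>n. \<forall>z\<in>QBc B. dirDs_est phase_dirs (\<lambda>x. inverse (a x)) A \<rho> (jbr z) z n (K * (2 * h) ^ n)"
    by (rule M4_weight.dirDs_inverse_est[OF A M3' smooth2_differentiable_dirDs[OF sm] U _ QU _ C h a_est])
       (auto simp: U_def jbr_def add_pos_nonneg)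
  then obtain K where K: "K > 0"
    "\<And>n z. z \<in> QBc B \<Longrightarrow> dirDs_est phase_dirs (\<lambda>x. inverse (a x)) A \<rho> (jbr z) z n (K * (2 * h) ^ n)"
    by blast
  have "inverse_est A \<rho> B a (2 * h) K"
    unfolding inverse_est_def mi_abs_add
  proof (intro allI impI)
    fix \<alpha> \<beta> and z :: "(real^'n) \<times> (real^'n)" assume z: "z \<in> QBc B"
    show "norm (Dxi \<alpha> (Dx \<beta> (\<lambda>z. inverse (a z))) z) \<le> K * (2 * h) ^ (mi_abs \<alpha> + mi_abs \<beta>)
        * norm (inverse (a z)) * A (mi_abs \<alpha> + mi_abs \<beta>) / jbr z powr (\<rho> * real (mi_abs \<alpha> + mi_abs \<beta>))"
    proof -
      have "length (coord_dirs dxi_dir \<alpha> @ coord_dirs dx_dir \<beta>) = mi_abs \<alpha> + mi_abs \<beta>"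
        by (simp add: length_coord_dirs)
      then have "norm (dirDs (coord_dirs dxi_dir \<alpha> @ coord_dirs dx_dir \<beta>) (\<lambda>x. inverse (a x)) z)
          \<le> K * (2 * h) ^ (mi_abs \<alpha> + mi_abs \<beta>) * norm (inverse (a z)) * A (mi_abs \<alpha> + mi_abs \<beta>)
            / jbr z powr (\<rho> * real (mi_abs \<alpha> + mi_abs \<beta>))"
        using K(2)[OF z, of "mi_abs \<alpha> + mi_abs \<beta>"] coord_dirs_append_in_phase_dirs[of \<alpha> \<beta>]
        unfolding dirDs_est_def by blast
      then show ?thesis
        using Dxi_Dx_inverse_eq[OF sm U _ QU[THEN subsetD, OF z], of \<alpha> \<beta>] by (simp add: U_def)
    qed
  qed
  then show ?thesis using K(1) by blast
qed

lemma hypo_lower_nonzero: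
  assumes "hypo_lower k M B a" "z \<in> QBc B"
  shows "a z \<noteq> 0"
proof -
  obtain x \<xi> where z: "z = (x, \<xi>)" by fastforce
  obtain c m where "c > 0" "norm (a z) \<ge> c * exp (- assoc_fun M (m * norm x) - assoc_fun M (m * norm \<xi>))"
  proof (cases k)
    case Beurling
    then show ?thesis using assms z that by (auto simp: hypo_lower_def Let_def)
  next
    case Roumieu
    then have "\<forall>m>0. \<exists>c>0. \<forall>x \<xi>. (x, \<xi>) \<in> QBc B \<longrightarrow>
        norm (a (x, \<xi>)) \<ge> c * exp (- assoc_fun M (m * norm x) - assoc_fun M (m * norm \<xi>))"
      using assms(1) by (simp add: hypo_lower_def Let_def)
    then obtain c where "c > 0" "\<forall>x \<xi>. (x, \<xi>) \<in> QBc B \<longrightarrow>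
        norm (a (x, \<xi>)) \<ge> c * exp (- assoc_fun M (1 * norm x) - assoc_fun M (1 * norm \<xi>))"
      by (meson zero_less_one)
    then show ?thesis using assms(2) z that by blast
  qed
  moreover have "c * exp (- assoc_fun M (m * norm x) - assoc_fun M (m * norm \<xi>)) > 0"
    using \<open>c > 0\<close> by simp
  ultimately have "norm (a z) > 0" by linarith
  then show ?thesis by auto
qed

lemma inverse_est_of_hypo_upper:
  assumes upper: "hypo_upper k A \<rho> B' a"
    and inverse: "\<And>h C. deriv_est A \<rho> B' h C a \<Longrightarrow> h > 0 \<Longrightarrow> C > 0 \<Longrightarrow>
                   \<exists>K>0. inverse_est A \<rho> B a (2 * h) K"
  shows "case k of
      Beurling \<Rightarrow> (\<forall>h>0. \<exists>C>0. inverse_est A \<rho> B a h C)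
    | Roumieu \<Rightarrow> (\<exists>h>0. \<exists>C>0. inverse_est A \<rho> B a h C)"
proof (cases k)
  case Beurling
  have "\<exists>C>0. inverse_est A \<rho> B a h C" if h: "h > 0" for h
  proof -
    have "\<forall>h>0. \<exists>C>0. deriv_est A \<rho> B' h C a" using upper Beurling by (simp add: hypo_upper_def)
    then obtain C where "C > 0" "deriv_est A \<rho> B' (h / 2) C a"
      using half_gt_zero[OF h] by blast
    then show ?thesis using inverse[of "h / 2" C] h by auto
  qed
  then show ?thesis using Beurling by simp
next
  case Roumieu
  then obtain h C where h: "h > 0" "C > 0" "deriv_est A \<rho> B' h C a"
    using upper by (auto simp: hypo_upper_def)
  then obtain K where "K > 0" "inverse_est A \<rho> B a (2 * h) K" using inverse by blast
  moreover have "2 * h > 0" using h by simp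
  ultimately have "\<exists>h>0. \<exists>C>0. inverse_est A \<rho> B a h C" by blast
  then show ?thesis using Roumieu by simp
qed

theorem lemma3:
  fixes M A :: "nat \<Rightarrow> real" and \<rho> :: real and k :: ultra_kind
    and a :: "(real^'n::finite) \<times> (real^'n) \<Rightarrow> complex"
  assumes M: "weight_seq M" "cond_M1 M" "cond_M2 M" "cond_M3 M"
    and A: "weight_seq A" "cond_M1 A" "cond_M2 A" "cond_M3' A" "cond_M4 A"
    and AM: "\<exists>c0 L. c0 > 0 \<and> L > 0 \<and> (\<forall>p. A p \<le> c0 * L ^ p * M p)"
    and rho: "admissible_rho M A \<rho>"
    and sym: "Gamma_sym k M A \<rho> a"
    and hyp: "hypoelliptic k M A \<rho> a"
  shows "\<exists>B>0. (\<forall>z\<in>QBc B. a z \<noteq> 0) \<and>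
    (let p0 = (\<lambda>z. inverse (a z));
         est = (\<lambda>h C. \<forall>\<alpha> \<beta> z. z \<in> QBc B \<longrightarrow>
                 norm (Dxi \<alpha> (Dx \<beta> p0) z) \<le>
                   C * h ^ (mi_abs \<alpha> + mi_abs \<beta>) * norm (p0 z) * A (mi_abs (\<lambda>i. \<alpha> i + \<beta> i))
                   / jbr z powr (\<rho> * real (mi_abs \<alpha> + mi_abs \<beta>)))
     in case k of
          Beurling \<Rightarrow> (\<forall>h>0. \<exists>C>0. est h C)
        | Roumieu \<Rightarrow> (\<exists>h>0. \<exists>C>0. est h C))"
proof -
  have sm: "smooth2 a" using sym by (simp add: Gamma_sym_def)
  have W: "M4_weight A" using A(1,5) by (simp add: M4_weight_def)
  obtain B1 B2 where B1: "B1 > 0" "hypo_lower k M B1 a" and B2: "B2 > 0" "hypo_upper k A \<rho> B2 a"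
    using hyp by (auto simp: hypoelliptic_def)
  define B where "B = max B1 B2"
  have nz: "\<forall>z\<in>QBc B. a z \<noteq> 0"
    using hypo_lower_nonzero[OF B1(2)] by (auto simp: B_def QBc_def)
  have "case k of Beurling \<Rightarrow> (\<forall>h>0. \<exists>C>0. inverse_est A \<rho> B a h C)
                | Roumieu \<Rightarrow> (\<exists>h>0. \<exists>C>0. inverse_est A \<rho> B a h C)"
    using inverse_symbol_est[OF sm W A(4) _ _ _ _ max.cobounded2] nz
    by (intro inverse_est_of_hypo_upper[OF B2(2)]) (auto simp: B_def)
  moreover have "B > 0" using B1(1) by (simp add: B_def)
  ultimately show ?thesis
    using nz unfolding inverse_est_def Let_def by (intro exI[of _ B]) (cases k; simp)
qed

end
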